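(* Let $G=(V,E,m,w)$ be a weighted graph admitting an intrinsic metric $\rho$ such that every ball $B_R(x)=\{y\in V:\rho(y,x)\le R\}$ ($x\in V$, $R>0$) is a finite set and the jump size $s:=\sup_{x\sim y}\rho(x,y)$ is finite. Suppose $G$ has polynomial volume growth with respect to $\rho$, i.e. there are $x_0\in V$ and constants $\alpha, C$ such that $m(B_R(x_0))\le C(1+R)^{\alpha}$ for all $R>0$. Then for all real $k\ge 1$, $$\dim \mathcal{P}_{2k}(G)\le (k+1)\dim \mathcal{H}_{2k}(G).$$
   Context: A weighted graph $G=(V,E,m,w)$ consists of a locally finite, simple, undirected, connected graph $(V,E)$, a symmetric edge weight $w:E\to(0,\infty)$, $\{x,y\}\mapsto w_{xy}=w_{yx}$ (extended by $w_{xy}=0$ if $x\not\sim y$), and a vertex weight $m:V\to(0,\infty)$; $m(\Omega)=\sum_{x\in\Omega}m_x$. The Laplacian is $\Delta f(x)=\sum_{y\sim x}\frac{w_{xy}}{m_x}(f(y)-f(x))$. A (pseudo)metric $\rho:V\times V\to[0,\infty)$ (symmetric, triangle inequality, $\rho(x,x)=0$) is intrinsic if $\sum_{y\sim x}w_{xy}\rho^2(x,y)\le m_x$ for all $x\in V$. $\mathcal{H}_k(G)$ is the space of functions $f$ on $V$ with $\Delta f=0$ such that there exist $x_0\in V$ and $C_f$ with $\sup_{x\in B_R(x_0)}|f(x)|\le C_f(1+R)^k$ for all $R>0$. An ancient solution of the heat equation is a function $u(x,t)$ on $V\times(-\infty,0]$, differentiable in $t$, with $\partial_t u(x,t)=\Delta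 u(x,t)$ for all $x\in V$, $t\le 0$. $\mathcal{P}_k(G)$ is the space of ancient solutions $u$ for which there are $x_0\in V$ and $C_u$ with $\sup_{(x,t)\in B_R(x_0)\times[-R^2,0]}|u(x,t)|\le C_u(1+R)^k$ for all $R>0$. *)

theory Defs
  imports "HOL-Analysis.Analysis"
begin

definition weighted_graph :: "('v \<Rightarrow> 'v \<Rightarrow> bool) \<Rightarrow> ('v \<Rightarrow> 'v \<Rightarrow> real) \<Rightarrow> ('v \<Rightarrow> real) \<Rightarrow> bool" where
  "weighted_graph adj w m \<longleftrightarrow>
     (\<forall>x. \<not> adj x x) \<and> (\<forall>x y. adj x y \<longrightarrow> adj y x) \<and>
     (\<forall>x. finite {y. adj x y}) \<and> (\<forall>x y. adj\<^sup>*\<^sup>* x y) \<and>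
     (\<forall>x y. w x y = w y x) \<and> (\<forall>x y. adj x y \<longrightarrow> w x y > 0) \<and>
     (\<forall>x y. \<not> adj x y \<longrightarrow> w x y = 0) \<and> (\<forall>x. m x > 0)"

definition laplacian :: "('v \<Rightarrow> 'v \<Rightarrow> bool) \<Rightarrow> ('v \<Rightarrow> 'v \<Rightarrow> real) \<Rightarrow> ('v \<Rightarrow> real) \<Rightarrow> ('v \<Rightarrow> real) \<Rightarrow> 'v \<Rightarrow> real" where
  "laplacian adj w m f x = (\<Sum>y\<in>{y. adj x y}. w x y / m x * (f y - f x))"

definition pseudometric :: "('v \<Rightarrow> 'v \<Rightarrow> real) \<Rightarrow> bool" where
  "pseudometric \<rho> \<longleftrightarrow> (\<forall>x y. \<rho> x y \<ge> 0) \<and> (\<forall>x. \<rho> x x = 0) \<and>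
     (\<forall>x y. \<rho> x y = \<rho> y x) \<and> (\<forall>x y z. \<rho> x z \<le> \<rho> x y + \<rho> y z)"

definition intrinsic_metric :: "('v \<Rightarrow> 'v \<Rightarrow> bool) \<Rightarrow> ('v \<Rightarrow> 'v \<Rightarrow> real) \<Rightarrow> ('v \<Rightarrow> real) \<Rightarrow> ('v \<Rightarrow> 'v \<Rightarrow> real) \<Rightarrow> bool" where
  "intrinsic_metric adj w m \<rho> \<longleftrightarrow> pseudometric \<rho> \<and>
     (\<forall>x. (\<Sum>y\<in>{y. adj x y}. w x y * (\<rho> x y)\<^sup>2) \<le> m x)"

definition ball_rho :: "('v \<Rightarrow> 'v \<Rightarrow> real) \<Rightarrow> 'v \<Rightarrow> real \<Rightarrow> 'v set" where
  "ball_rho \<rho> x R = {y. \<rho> y x \<le> R}"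

definition harmonic_poly :: "('v \<Rightarrow> 'v \<Rightarrow> bool) \<Rightarrow> ('v \<Rightarrow> 'v \<Rightarrow> real) \<Rightarrow> ('v \<Rightarrow> real) \<Rightarrow> ('v \<Rightarrow> 'v \<Rightarrow> real) \<Rightarrow> real \<Rightarrow> ('v \<Rightarrow> real) set" where
  "harmonic_poly adj w m \<rho> k = {f. (\<forall>x. laplacian adj w m f x = 0) \<and>
     (\<exists>x0 C. \<forall>R>0. \<forall>x\<in>ball_rho \<rho> x0 R. \<bar>f x\<bar> \<le> C * (1 + R) powr k)}"

text \<open>Functions are represented on 'v \<times> real, normalised to 0 for t > 0 so that
  they are determined by their values on V \<times> (-\<infinity>,0]. The time derivative at t = 0 is
  one-sided (within (-\<infinity>,0]).\<close>
definition ancient_poly :: "('v \<Rightarrow> 'v \<Rightarrow> bool) \<Rightarrow> ('v \<Rightarrow> 'v \<Rightarrow> real) \<Rightarrow> ('v \<Rightarrow> real) \<Rightarrow> ('v \<Rightarrow> 'v \<Rightarrow> real) \<Rightarrow> real \<Rightarrow> ('v \<times> real \<Rightarrow> real) set" where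
  "ancient_poly adj w m \<rho> k = {u. (\<forall>x t. t > 0 \<longrightarrow> u (x, t) = 0) \<and>
     (\<forall>x. \<forall>t\<le>0. ((\<lambda>s. u (x, s)) has_real_derivative
          laplacian adj w m (\<lambda>y. u (y, t)) x) (at t within {..0})) \<and>
     (\<exists>x0 C. \<forall>R>0. \<forall>x\<in>ball_rho \<rho> x0 R. \<forall>t\<in>{-(R\<^sup>2)..0}. \<bar>u (x, t)\<bar> \<le> C * (1 + R) powr k)}"

definition lin_indep_fun :: "('a \<Rightarrow> real) set \<Rightarrow> bool" where
  "lin_indep_fun F \<longleftrightarrow> (\<forall>c. (\<lambda>z. \<Sum>f\<in>F. c f * f z) = (\<lambda>z. 0) \<longrightarrow> (\<forall>f\<in>F. c f = 0))"

definition fdim :: "('a \<Rightarrow> real) set \<Rightarrow> ereal" where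
  "fdim S = (SUP F\<in>{F. finite F \<and> F \<subseteq> S \<and> lin_indep_fun F}. ereal (real (card F)))"

end

theory Submission
  imports Defs "HOL-Library.Function_Algebras"
begin

text \<open>Caccioppoli inequalities with a cutoff adapted to the intrinsic metric, integrated in time
  against a linear time cutoff, bound the space-time mass of \<open>\<Delta>u\<close> on the cylinder of radius
  \<open>R\<close> by \<open>C R\<^sup>-\<^sup>4\<close> times the mass of \<open>u\<close> on the cylinder of radius \<open>7R\<close>. For \<open>u \<in> P\<^sub>2\<^sub>k\<close> and
  polynomial volume growth, iterating this forces \<open>\<Delta>\<^sup>j u = 0\<close> for large \<open>j\<close>. If
  \<open>\<Delta>\<^sup>d\<^sup>+\<^sup>1 u = 0\<close>, then \<open>\<Delta>\<^sup>d u\<close> is constant in time and equals \<open>h\<^sup>-\<^sup>d\<close> times the \<open>d\<close>-th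
  time difference of \<open>u\<close> with step \<open>h\<close>, which is \<open>O(h\<^sup>k)\<close>; hence \<open>\<Delta>\<^sup>d u = 0\<close> once \<open>d > k\<close>,
  and every \<open>u \<in> P\<^sub>2\<^sub>k\<close> satisfies \<open>\<Delta>\<^sup>D u = 0\<close> with \<open>D = \<lfloor>k\<rfloor> + 1 \<le> k + 1\<close>. Finally
  \<open>u \<mapsto> \<Delta>\<^sup>n u(\<cdot>, 0)\<close> maps \<open>{\<Delta>\<^sup>n\<^sup>+\<^sup>1 u = 0}\<close> into \<open>H\<^sub>2\<^sub>k\<close> with kernel \<open>{\<Delta>\<^sup>n u = 0}\<close>, so the
  dimension grows by at most \<open>dim H\<^sub>2\<^sub>k\<close> with each power of \<open>\<Delta>\<close>.\<close>

instantiation "fun" :: (type, real_vector) real_vector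
begin

definition scaleR_fun :: "real \<Rightarrow> ('a \<Rightarrow> 'b) \<Rightarrow> 'a \<Rightarrow> 'b" where
  "scaleR_fun c f = (\<lambda>x. c *\<^sub>R f x)"

instance by standard (auto simp: scaleR_fun_def plus_fun_def algebra_simps)

end

lemma scaleR_fun_apply [simp]: "(c *\<^sub>R f) x = c *\<^sub>R f x"
  by (simp add: scaleR_fun_def)

lemma sum_fun_apply: "(\<Sum>i\<in>A. f i) x = (\<Sum>i\<in>A. f i x)"
  by (induction A rule: infinite_finite_induct) auto

lemma linear_funpow:
  fixes f :: "'a::real_vector \<Rightarrow> 'a"
  shows "linear f \<Longrightarrow> linear (f ^^ n)"
proof (induction n)
  case (Suc n)
  then show ?case using linear_compose[of "f ^^ n" f] by (simp add: o_def)
qed (simp add: linear_ident id_def)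

lemma lin_indep_fun_iff_independent:
  fixes F :: "('a \<Rightarrow> real) set"
  assumes "finite F"
  shows "lin_indep_fun F \<longleftrightarrow> independent F"
proof -
  have "(\<lambda>z. \<Sum>f\<in>F. c f * f z) = (\<Sum>f\<in>F. c f *\<^sub>R f)" for c
    by (auto simp: sum_fun_apply)
  then show ?thesis
    unfolding lin_indep_fun_def using dependent_finite[OF assms] by (auto simp: zero_fun_def)
qed

lemma card_le_fdim:
  assumes "finite B" "B \<subseteq> S" "independent B"
  shows "ereal (real (card B)) \<le> fdim S"
  unfolding fdim_def using assms lin_indep_fun_iff_independent by (intro SUP_upper) auto

lemma fdim_nonneg: "0 \<le> fdim S"
  using card_le_fdim[of "{}" S] by (simp add: zero_ereal_def independent_empty)

lemma fdim_mono: "S \<subseteq> T \<Longrightarrow> fdim S \<le> fdim T"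
  unfolding fdim_def by (rule SUP_subset_mono) auto

lemma fdim_zero: "fdim {0} = 0"
proof (rule antisym[OF _ fdim_nonneg])
  have "F = {}" if "F \<subseteq> {0}" "lin_indep_fun F" for F :: "('a \<Rightarrow> real) set"
  proof (rule ccontr)
    assume "F \<noteq> {}"
    then have "F = {0}" using that(1) by blast
    then show False using that(2) dependent_zero[of F] lin_indep_fun_iff_independent[of F] by simp
  qed
  then show "fdim {0 :: 'a \<Rightarrow> real} \<le> 0"
    unfolding fdim_def by (intro SUP_least) (auto simp: zero_ereal_def)
qed

lemma independent_card_le_kernel_image:
  fixes L :: "'a::real_vector \<Rightarrow> 'b::real_vector"
  assumes L: "linear L" and fin: "finite F" and ind: "independent F"
  obtains B1 B2 where "B1 \<subseteq> span F" "\<forall>b\<in>B1. L b = 0" "independent B1" "finite B1"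
    "B2 \<subseteq> L ` F" "independent B2" "finite B2" "card F \<le> card B1 + card B2"
proof -
  define K where "K = span F \<inter> {u. L u = 0}"
  obtain B1 where B1: "B1 \<subseteq> K" "independent B1" "K \<subseteq> span B1"
    using maximal_independent_subset by blast
  have fin_B1: "finite B1"
    using independent_span_bound[OF fin B1(2)] B1(1) K_def by auto
  obtain B2 where B2: "B2 \<subseteq> L ` F" "independent B2" "L ` F \<subseteq> span B2"
    using maximal_independent_subset by blast
  obtain C where C: "C \<subseteq> F" "inj_on L C" "B2 = L ` C"
    using B2(1) subset_image_inj by metis
  have fin_C: "finite C" using C(1) fin finite_subset by blast
  have "F \<subseteq> span (B1 \<union> C)"
  proof
    fix f assume f: "f \<in> F"
    have "L f \<in> span B2" using B2(3) f by auto
    also have "span B2 = L ` span C" using C(3) linear_span_image[OF L] by simp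
    finally obtain g where g: "g \<in> span C" "L f = L g" by auto
    have "g \<in> span F" using g(1) C(1) span_mono by blast
    then have "f - g \<in> span B1"
      using B1(3) g f by (auto simp: K_def linear_diff[OF L] span_diff span_base)
    then have "f - g \<in> span (B1 \<union> C)" using span_mono[of B1 "B1 \<union> C"] by blast
    moreover have "g \<in> span (B1 \<union> C)" using g(1) span_mono[of C "B1 \<union> C"] by blast
    ultimately have "(f - g) + g \<in> span (B1 \<union> C)" by (rule span_add)
    then show "f \<in> span (B1 \<union> C)" by simp
  qed
  then have "card F \<le> card (B1 \<union> C)"
    using dim_le_card[of F "B1 \<union> C"] dim_eq_card_independent[OF ind] fin_B1 fin_C by simp
  also have "\<dots> \<le> card B1 + card B2"
    using card_Un_le[of B1 C] card_image[OF C(2)] C(3) by simp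
  finally have "card F \<le> card B1 + card B2" .
  moreover have "finite B2" using B2(1) fin finite_surj by blast
  ultimately show thesis
    using that[of B1 B2] B1 B2 fin_B1 unfolding K_def by blast
qed

lemma fdim_le_kernel_image:
  fixes L :: "('a \<Rightarrow> real) \<Rightarrow> 'b \<Rightarrow> real"
  assumes L: "linear L" and V: "subspace V" and LV: "L ` V \<subseteq> W"
  shows "fdim V \<le> fdim {u \<in> V. L u = 0} + fdim W"
  unfolding fdim_def[of V]
proof (rule SUP_least)
  fix F assume "F \<in> {F. finite F \<and> F \<subseteq> V \<and> lin_indep_fun F}"
  then have F: "finite F" "F \<subseteq> V" "independent F"
    using lin_indep_fun_iff_independent by auto
  obtain B1 B2 where B: "B1 \<subseteq> span F" "\<forall>b\<in>B1. L b = 0" "independent B1" "finite B1"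
    "B2 \<subseteq> L ` F" "independent B2" "finite B2" "card F \<le> card B1 + card B2"
    using independent_card_le_kernel_image[OF L F(1,3)] by blast
  have "B1 \<subseteq> {u \<in> V. L u = 0}" using B(1,2) span_minimal[OF F(2) V] by auto
  then have "ereal (card B1) \<le> fdim {u \<in> V. L u = 0}" using B(3,4) by (rule card_le_fdim[rotated])
  moreover have "ereal (card B2) \<le> fdim W" using B(5-7) F(2) LV by (intro card_le_fdim) auto
  ultimately have "ereal (card B1) + ereal (card B2) \<le> fdim {u \<in> V. L u = 0} + fdim W"
    by (rule add_mono)
  moreover have "ereal (card F) \<le> ereal (card B1) + ereal (card B2)"
    using B(8) by simp
  ultimately show "ereal (card F) \<le> fdim {u \<in> V. L u = 0} + fdim W"
    by (rule order_trans[rotated])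
qed

lemma has_real_derivative_power2:
  "(f has_real_derivative f') (at t within S) \<Longrightarrow>
   ((\<lambda>s. (f s)\<^sup>2) has_real_derivative 2 * f t * f') (at t within S)"
  by (auto intro!: derivative_eq_intros)

lemma integral_mono_continuous:
  fixes f g :: "real \<Rightarrow> real"
  assumes "continuous_on {a..b} f" "continuous_on {a..b} g" "\<And>t. t \<in> {a..b} \<Longrightarrow> f t \<le> g t"
  shows "integral {a..b} f \<le> integral {a..b} g"
  using assms by (intro integral_le integrable_continuous_interval) auto

lemma integral_nonneg_continuous:
  fixes f :: "real \<Rightarrow> real"
  assumes "continuous_on {a..b} f" "\<And>t. t \<in> {a..b} \<Longrightarrow> 0 \<le> f t"
  shows "0 \<le> integral {a..b} f"
  using assms by (intro integral_nonneg integrable_continuous_interval) auto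

lemma integral_ramp_mult_deriv:
  fixes \<Phi> \<phi> :: "real \<Rightarrow> real"
  assumes T: "T > 0"
    and deriv: "\<And>t. t \<in> {-T..0} \<Longrightarrow> (\<Phi> has_real_derivative \<phi> t) (at t within {-T..0})"
    and cont: "continuous_on {-T..0} \<phi>"
  shows "integral {-T..0} (\<lambda>t. (t + T) / T * \<phi> t) = \<Phi> 0 - integral {-T..0} \<Phi> / T"
proof -
  have cont_\<Phi>: "continuous_on {-T..0} \<Phi>"
    using deriv DERIV_continuous continuous_on_eq_continuous_within by blast
  have "((\<lambda>t. \<Phi> t / T + (t + T) / T * \<phi> t) has_integral
      (0 + T) / T * \<Phi> 0 - (-T + T) / T * \<Phi> (-T)) {-T..0}"
  proof (rule fundamental_theorem_of_calculus)
    fix t assume t: "t \<in> {-T..0}"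
    have "((\<lambda>t. (t + T) / T * \<Phi> t) has_real_derivative \<Phi> t / T + (t + T) / T * \<phi> t)
        (at t within {-T..0})"
      using deriv[OF t] T by (auto intro!: derivative_eq_intros simp: field_simps)
    then show "((\<lambda>t. (t + T) / T * \<Phi> t) has_vector_derivative \<Phi> t / T + (t + T) / T * \<phi> t)
        (at t within {-T..0})"
      by (simp add: has_real_derivative_iff_has_vector_derivative)
  qed (use T in simp)
  then have "integral {-T..0} (\<lambda>t. \<Phi> t / T + (t + T) / T * \<phi> t) = \<Phi> 0"
    using T by (simp add: integral_unique)
  moreover have "integral {-T..0} (\<lambda>t. \<Phi> t / T + (t + T) / T * \<phi> t)
      = integral {-T..0} \<Phi> / T + integral {-T..0} (\<lambda>t. (t + T) / T * \<phi> t)"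
    using cont cont_\<Phi> T
    by (simp add: integral_add integral_divide integrable_continuous_interval continuous_intros)
  ultimately show ?thesis by simp
qed

lemma integral_le_twice_ramp_integral:
  fixes a :: "real \<Rightarrow> real"
  assumes T: "T > 0" and cont: "continuous_on {-T..0} a"
    and nonneg: "\<And>t. t \<in> {-T..0} \<Longrightarrow> a t \<ge> 0"
  shows "integral {-T/2..0} a \<le> 2 * integral {-T..0} (\<lambda>t. (t + T) / T * a t)"
proof -
  have sub: "{-T/2..0} \<subseteq> {-T..0}" using T by auto
  have cont_ramp: "continuous_on S (\<lambda>t. 2 * ((t + T) / T * a t))" if "S \<subseteq> {-T..0}" for S
    using T cont that by (auto intro!: continuous_intros intro: continuous_on_subset)
  have "integral {-T/2..0} a \<le> integral {-T/2..0} (\<lambda>t. 2 * ((t + T) / T * a t))"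
  proof (rule integral_mono_continuous)
    show "continuous_on {-T/2..0} a" using cont sub by (rule continuous_on_subset)
    fix t assume t: "t \<in> {-T/2..0}"
    then have "1 \<le> 2 * ((t + T) / T)" using T by (auto simp: field_simps)
    then have "1 * a t \<le> 2 * ((t + T) / T) * a t"
      using nonneg[of t] t sub by (intro mult_right_mono) auto
    then show "a t \<le> 2 * ((t + T) / T * a t)" by (simp only: mult_1 mult.assoc)
  qed (use cont_ramp sub in auto)
  also have "\<dots> \<le> integral {-T..0} (\<lambda>t. 2 * ((t + T) / T * a t))"
    using sub T nonneg cont_ramp
    by (intro integral_subset_le integrable_continuous_interval) auto
  finally show ?thesis by simp
qed

text \<open>The time cutoff: testing \<open>a \<le> -c \<Phi>' + b\<close> against the ramp \<open>(t + T) / T\<close>, which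
  vanishes at \<open>-T\<close> and is at least \<open>1/2\<close> on \<open>[-T/2, 0]\<close>.\<close>

lemma integral_le_by_time_cutoff:
  fixes \<Phi> \<phi> a b :: "real \<Rightarrow> real"
  assumes T: "T > 0" and c: "c \<ge> 0"
    and deriv: "\<And>t. t \<in> {-T..0} \<Longrightarrow> (\<Phi> has_real_derivative \<phi> t) (at t within {-T..0})"
    and cont: "continuous_on {-T..0} \<phi>" "continuous_on {-T..0} a" "continuous_on {-T..0} b"
    and nonneg: "\<And>t. t \<in> {-T..0} \<Longrightarrow> \<Phi> t \<ge> 0 \<and> a t \<ge> 0 \<and> b t \<ge> 0"
    and ineq: "\<And>t. t \<in> {-T..0} \<Longrightarrow> a t \<le> -c * \<phi> t + b t"
  shows "integral {-T/2..0} a \<le> 2 * (c / T * integral {-T..0} \<Phi> + integral {-T..0} b)"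
proof -
  define ramp where "ramp t = (t + T) / T" for t
  have cont_ramp: "continuous_on S ramp" for S
    unfolding ramp_def using T by (intro continuous_intros) auto
  have "integral {-T..0} (\<lambda>t. ramp t * a t) \<le> integral {-T..0} (\<lambda>t. -c * (ramp t * \<phi> t) + b t)"
  proof (rule integral_mono_continuous)
    fix t assume t: "t \<in> {-T..0}"
    then have ramp: "0 \<le> ramp t" "ramp t \<le> 1" using T by (auto simp: ramp_def field_simps)
    then have "ramp t * a t \<le> ramp t * (-c * \<phi> t + b t)"
      using ineq[OF t] by (intro mult_left_mono) auto
    also have "\<dots> \<le> -c * (ramp t * \<phi> t) + b t"
      using ramp nonneg[OF t] by (simp add: algebra_simps mult_left_le)
    finally show "ramp t * a t \<le> -c * (ramp t * \<phi> t) + b t" .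
  qed (use cont cont_ramp in \<open>auto intro!: continuous_intros\<close>)
  also have "\<dots> = -c * integral {-T..0} (\<lambda>t. ramp t * \<phi> t) + integral {-T..0} b"
  proof -
    have "(\<lambda>t. ramp t * \<phi> t) integrable_on {-T..0}" "b integrable_on {-T..0}"
      using cont cont_ramp by (auto intro!: integrable_continuous_interval continuous_intros)
    then have "((\<lambda>t. -c * (ramp t * \<phi> t) + b t) has_integral
        -c * integral {-T..0} (\<lambda>t. ramp t * \<phi> t) + integral {-T..0} b) {-T..0}"
      by (intro has_integral_mult_right has_integral_add integrable_integral)
    then show ?thesis by (rule integral_unique)
  qed
  also have "\<dots> = -c * \<Phi> 0 + c / T * integral {-T..0} \<Phi> + integral {-T..0} b"
    using integral_ramp_mult_deriv[OF T deriv cont(1)] T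
    unfolding ramp_def by (simp add: right_diff_distrib)
  also have "\<dots> \<le> c / T * integral {-T..0} \<Phi> + integral {-T..0} b"
    using c nonneg[of 0] T by simp
  finally show ?thesis
    using integral_le_twice_ramp_integral[OF T cont(2)] nonneg unfolding ramp_def by fastforce
qed

definition backward_diff :: "real \<Rightarrow> (real \<Rightarrow> real) \<Rightarrow> real \<Rightarrow> real" where
  "backward_diff h g = (\<lambda>t. g t - g (t - h))"

lemma backward_diff_funpow_abs_le:
  assumes "h \<ge> 0" "\<And>s. s \<in> {t - real n * h..t} \<Longrightarrow> \<bar>g s\<bar> \<le> B"
  shows "\<bar>(backward_diff h ^^ n) g t\<bar> \<le> 2 ^ n * B"
  using assms(2)
proof (induction n arbitrary: g B)
  case (Suc n)
  have "\<bar>backward_diff h g s\<bar> \<le> 2 * B" if "s \<in> {t - real n * h..t}" for s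
  proof -
    have "s \<in> {t - real (Suc n) * h..t}" "s - h \<in> {t - real (Suc n) * h..t}"
      using that assms(1) by (auto simp: algebra_simps)
    then show ?thesis using Suc.prems[of s] Suc.prems[of "s - h"] by (simp add: backward_diff_def)
  qed
  then have "\<bar>(backward_diff h ^^ n) (backward_diff h g) t\<bar> \<le> 2 ^ n * (2 * B)"
    by (rule Suc.IH)
  then show ?case unfolding funpow_Suc_right o_apply by (simp add: mult.left_commute)
qed simp

lemma diff_eq_if_has_derivative_const:
  assumes "\<And>t. t \<le> 0 \<Longrightarrow> (f has_real_derivative c) (at t within {..0})" "a \<le> 0" "b \<le> 0"
  shows "f a - f b = c * (a - b)"
proof -
  have "\<exists>k. \<forall>t\<in>{..0::real}. f t - c * t = k"
    using assms(1) by (intro has_field_derivative_zero_constant) (auto intro!: derivative_eq_intros)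
  then show ?thesis using assms(2,3) by (auto simp: algebra_simps)
qed

lemma has_real_derivative_shift_nonpos:
  assumes h: "h > 0" and t: "t \<le> 0"
    and deriv: "(g has_real_derivative D) (at (t - h) within {..0})"
  shows "((\<lambda>s. g (s - h)) has_real_derivative D) (at t within {..0})"
proof -
  have "t - h \<in> interior {..(0::real)}" using h t by simp
  then have "(g has_real_derivative D) (at (t + - h))" using deriv at_within_interior by fastforce
  then have "((\<lambda>s. g (s + - h)) has_real_derivative D) (at t)" by (simp only: DERIV_shift)
  then show ?thesis by (simp add: has_field_derivative_at_within)
qed

text \<open>If \<open>G\<^sub>0, G\<^sub>1, \<dots>\<close> are successive derivatives on \<open>(-\<infinity>, 0]\<close> and \<open>G\<^sub>d\<^sub>+\<^sub>1 = 0\<close>, then \<open>G\<^sub>0\<close> is a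
  polynomial of degree \<open>d\<close> with leading coefficient \<open>G\<^sub>d / d!\<close>, so its \<open>d\<close>-th difference is
  \<open>h\<^sup>d G\<^sub>d\<close>. The induction passes to the differences \<open>G\<^sub>i - G\<^sub>i(\<cdot> - h)\<close>.\<close>

lemma backward_diff_funpow_eq:
  fixes G :: "nat \<Rightarrow> real \<Rightarrow> real"
  assumes h: "h > 0"
    and deriv: "\<And>i t. t \<le> 0 \<Longrightarrow> (G i has_real_derivative G (Suc i) t) (at t within {..0})"
    and top: "\<And>t. t \<le> 0 \<Longrightarrow> G (Suc d) t = 0"
    and t: "t \<le> 0"
  shows "(backward_diff h ^^ d) (G 0) t = h ^ d * G d t"
  using deriv top t
proof (induction d arbitrary: G t)
  case (Suc d)
  define G' where "G' i = backward_diff h (G i)" for i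
  have deriv': "(G' i has_real_derivative G' (Suc i) t) (at t within {..0})" if "t \<le> 0" for i t
  proof -
    have "t - h \<le> 0" using that h by simp
    from has_real_derivative_shift_nonpos[OF h that Suc.prems(1)[OF this]] Suc.prems(1)[OF that]
    show ?thesis unfolding G'_def backward_diff_def by (intro DERIV_diff)
  qed
  have "(G (Suc d) has_real_derivative 0) (at t' within {..0})" if "t' \<le> 0" for t'
    using Suc.prems(1)[OF that, of "Suc d"] Suc.prems(2)[OF that] by simp
  then have const: "G (Suc d) t' = G (Suc d) 0" if "t' \<le> 0" for t'
    using diff_eq_if_has_derivative_const[of "G (Suc d)" 0 t' 0] that by simp
  have "(backward_diff h ^^ Suc d) (G 0) t = (backward_diff h ^^ d) (G' 0) t"
    by (simp only: funpow_Suc_right o_apply G'_def)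
  also have "\<dots> = h ^ d * G' d t"
  proof (rule Suc.IH[where G = G'])
    fix t' :: real assume t': "t' \<le> 0"
    then have "t' - h \<le> 0" using h by simp
    then show "G' (Suc d) t' = 0"
      using const[OF t'] const[of "t' - h"] by (simp add: G'_def backward_diff_def)
  qed (use deriv' Suc.prems(3) in auto)
  also have "G' d t = G (Suc d) 0 * (t - (t - h))"
  proof -
    have "(G d has_real_derivative G (Suc d) 0) (at t' within {..0})" if "t' \<le> 0" for t'
      using Suc.prems(1)[OF that, of d] const[OF that] by simp
    then show ?thesis
      unfolding G'_def backward_diff_def using Suc.prems(3) h
      by (intro diff_eq_if_has_derivative_const) auto
  qed
  finally show ?case using const[OF Suc.prems(3)] by simp
qed simp

lemma nonpos_if_le_powr_neg:
  fixes x K e h0 :: real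
  assumes e: "e < 0" and le: "\<And>h. h \<ge> h0 \<Longrightarrow> x \<le> K * h powr e"
  shows "x \<le> 0"
proof (rule tendsto_lowerbound)
  show "((\<lambda>h. K * h powr e) \<longlongrightarrow> 0) at_top"
    using tendsto_mult[OF tendsto_const[of K] tendsto_neg_powr[OF e filterlim_ident]] by simp
  show "\<forall>\<^sub>F h in at_top. x \<le> K * h powr e"
    using le by (rule eventually_at_top_linorderI)
qed simp

lemma integral_nonpos_imp_eq_0:
  fixes g :: "real \<Rightarrow> real"
  assumes cont: "continuous_on {a..b} g" and nonneg: "\<And>t. t \<in> {a..b} \<Longrightarrow> g t \<ge> 0"
    and nonpos: "integral {a..b} g \<le> 0" and "a < b" "t \<in> {a..b}"
  shows "g t = 0"
proof -
  have "integral {a..b} g = 0"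
    using nonpos integral_nonneg_continuous[OF cont nonneg] by linarith
  then have "(g has_integral 0) {a..b}"
    using integrable_continuous_interval[OF cont] has_integral_integrable_integral by metis
  then show ?thesis
    using cont nonneg assms(4,5) by (intro has_integral_0_cbox_imp_0[of a b g]) auto
qed

section \<open>Weighted graphs with an intrinsic metric\<close>

lemma sum_sum_mono_subset:
  fixes f :: "'a \<Rightarrow> 'a \<Rightarrow> real"
  assumes "finite T'" "T \<subseteq> T'" "\<And>x y. f x y \<ge> 0"
  shows "(\<Sum>x\<in>T. \<Sum>y\<in>T. f x y) \<le> (\<Sum>x\<in>T'. \<Sum>y\<in>T'. f x y)"
proof -
  have "(\<Sum>x\<in>T. \<Sum>y\<in>T. f x y) \<le> (\<Sum>x\<in>T. \<Sum>y\<in>T'. f x y)"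
    using assms by (intro sum_mono sum_mono2) auto
  also have "\<dots> \<le> (\<Sum>x\<in>T'. \<Sum>y\<in>T'. f x y)"
    using assms by (intro sum_mono2 sum_nonneg) auto
  finally show ?thesis .
qed

locale intrinsic_graph =
  fixes adj :: "'v \<Rightarrow> 'v \<Rightarrow> bool" and w :: "'v \<Rightarrow> 'v \<Rightarrow> real" and m :: "'v \<Rightarrow> real"
    and \<rho> :: "'v \<Rightarrow> 'v \<Rightarrow> real" and s :: real
  assumes graph: "weighted_graph adj w m"
    and intrinsic: "intrinsic_metric adj w m \<rho>"
    and finite_ball: "\<And>x R. R > 0 \<Longrightarrow> finite (ball_rho \<rho> x R)"
    and jump_le: "\<And>x y. adj x y \<Longrightarrow> \<rho> x y \<le> s"
    and jump_nonneg: "s \<ge> 0"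
begin

abbreviation lap :: "('v \<Rightarrow> real) \<Rightarrow> 'v \<Rightarrow> real" where
  "lap \<equiv> laplacian adj w m"

lemma finite_adj: "finite {y. adj x y}"
  using graph unfolding weighted_graph_def by blast

lemma w_sym: "w x y = w y x"
  using graph unfolding weighted_graph_def by blast

lemma w_eq_0: "\<not> adj x y \<Longrightarrow> w x y = 0"
  using graph unfolding weighted_graph_def by blast

lemma w_nonneg: "w x y \<ge> 0"
  using graph unfolding weighted_graph_def by (cases "adj x y") (auto intro: less_imp_le)

lemma m_pos: "m x > 0"
  using graph unfolding weighted_graph_def by blast

lemma m_nonneg: "m x \<ge> 0"
  using m_pos less_imp_le by blast

lemma rho_nonneg: "\<rho> x y \<ge> 0"
  and rho_refl: "\<rho> x x = 0"
  and rho_sym: "\<rho> x y = \<rho> y x"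
  and rho_triangle: "\<rho> x z \<le> \<rho> x y + \<rho> y z"
  using intrinsic unfolding intrinsic_metric_def pseudometric_def by blast+

lemma intrinsic_sum_le:
  assumes "finite T"
  shows "(\<Sum>y\<in>T. w x y * (\<rho> x y)\<^sup>2) \<le> m x"
proof -
  have "(\<Sum>y\<in>T. w x y * (\<rho> x y)\<^sup>2) = (\<Sum>y\<in>T \<inter> {y. adj x y}. w x y * (\<rho> x y)\<^sup>2)"
    using assms by (intro sum.mono_neutral_right) (auto simp: w_eq_0)
  also have "\<dots> \<le> (\<Sum>y\<in>{y. adj x y}. w x y * (\<rho> x y)\<^sup>2)"
    using finite_adj by (intro sum_mono2) (auto simp: w_nonneg)
  also have "\<dots> \<le> m x"
    using intrinsic unfolding intrinsic_metric_def by blast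
  finally show ?thesis .
qed

lemma center_in_ball: "r \<ge> 0 \<Longrightarrow> x0 \<in> ball_rho \<rho> x0 r"
  by (simp add: ball_rho_def rho_refl)

lemma ball_mono: "r \<le> r' \<Longrightarrow> ball_rho \<rho> x0 r \<subseteq> ball_rho \<rho> x0 r'"
  by (auto simp: ball_rho_def)

lemma adj_in_ball: "adj x y \<Longrightarrow> \<rho> x x0 \<le> r \<Longrightarrow> y \<in> ball_rho \<rho> x0 (r + s)"
  using rho_triangle[of y x0 x] rho_sym[of x y] jump_le[of x y] by (simp add: ball_rho_def)

lemma m_mult_lap_eq_sum:
  assumes "finite T" "{y. adj x y} \<subseteq> T"
  shows "m x * lap f x = (\<Sum>y\<in>T. w x y * (f y - f x))"
proof -
  have "m x * lap f x = (\<Sum>y\<in>{y. adj x y}. w x y * (f y - f x))"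
    unfolding laplacian_def sum_distrib_left using m_pos[of x] by (intro sum.cong) auto
  also have "\<dots> = (\<Sum>y\<in>T. w x y * (f y - f x))"
    using assms by (intro sum.mono_neutral_left) (auto simp: w_eq_0)
  finally show ?thesis .
qed

lemma sum_sum_w_swap:
  "(\<Sum>x\<in>T. \<Sum>y\<in>T. w x y * F x y) = (\<Sum>x\<in>T. \<Sum>y\<in>T. w x y * F y x)"
  by (subst sum.swap) (simp add: w_sym)

lemma sum_by_parts:
  assumes T: "finite T"
    and closed: "\<And>x y. x \<in> T \<Longrightarrow> a x \<noteq> 0 \<Longrightarrow> adj x y \<Longrightarrow> y \<in> T"
  shows "(\<Sum>x\<in>T. m x * a x * lap b x)
    = -(1/2) * (\<Sum>x\<in>T. \<Sum>y\<in>T. w x y * (a y - a x) * (b y - b x))"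
proof -
  let ?S = "\<Sum>x\<in>T. \<Sum>y\<in>T. w x y * (a x * (b y - b x))"
  have "(\<Sum>x\<in>T. m x * a x * lap b x) = ?S"
  proof (intro sum.cong refl)
    fix x assume x: "x \<in> T"
    show "m x * a x * lap b x = (\<Sum>y\<in>T. w x y * (a x * (b y - b x)))"
    proof (cases "a x = 0")
      case False
      then have "m x * lap b x = (\<Sum>y\<in>T. w x y * (b y - b x))"
        using T closed x by (intro m_mult_lap_eq_sum) auto
      then show ?thesis by (simp add: sum_distrib_left algebra_simps)
    qed simp
  qed
  also have "?S = -(1/2) * (\<Sum>x\<in>T. \<Sum>y\<in>T. w x y * (a y - a x) * (b y - b x))"
  proof -
    have "?S = (\<Sum>x\<in>T. \<Sum>y\<in>T. w x y * (a y * (b x - b y)))"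
      by (rule sum_sum_w_swap)
    then have "2 * ?S = (\<Sum>x\<in>T. \<Sum>y\<in>T. w x y * (a x * (b y - b x)) + w x y * (a y * (b x - b y)))"
      by (simp add: sum.distrib)
    also have "\<dots> = (\<Sum>x\<in>T. \<Sum>y\<in>T. - (w x y * (a y - a x) * (b y - b x)))"
      by (simp add: algebra_simps)
    finally show ?thesis by (simp add: sum_negf)
  qed
  finally show ?thesis .
qed

definition space_lap :: "('v \<times> real \<Rightarrow> real) \<Rightarrow> 'v \<times> real \<Rightarrow> real" where
  "space_lap u = (\<lambda>(x, t). lap (\<lambda>y. u (y, t)) x)"

lemma space_lap_apply: "space_lap u (x, t) = lap (\<lambda>y. u (y, t)) x"
  by (simp add: space_lap_def)

lemma linear_space_lap: "linear space_lap"
proof (rule linearI)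
  show "space_lap (u + v) = space_lap u + space_lap v" for u v
    by (auto simp: space_lap_def laplacian_def sum.distrib[symmetric] algebra_simps
        add_divide_distrib diff_divide_distrib)
  show "space_lap (c *\<^sub>R u) = c *\<^sub>R space_lap u" for c u
    by (auto simp: space_lap_def laplacian_def sum_distrib_left algebra_simps diff_divide_distrib)
qed

definition heat_solution :: "('v \<times> real \<Rightarrow> real) \<Rightarrow> bool" where
  "heat_solution u \<longleftrightarrow>
    (\<forall>x. \<forall>t\<le>0. ((\<lambda>s. u (x, s)) has_real_derivative space_lap u (x, t)) (at t within {..0}))"

lemma heat_solution_deriv:
  "heat_solution u \<Longrightarrow> t \<le> 0 \<Longrightarrow> S \<subseteq> {..0} \<Longrightarrow>
    ((\<lambda>s. u (x, s)) has_real_derivative space_lap u (x, t)) (at t within S)"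
  unfolding heat_solution_def by (meson DERIV_subset)

lemma heat_solution_space_lap:
  assumes "heat_solution u"
  shows "heat_solution (space_lap u)"
  unfolding heat_solution_def
proof (intro allI impI)
  fix x and t :: real assume t: "t \<le> 0"
  have "((\<lambda>s. \<Sum>y\<in>{y. adj x y}. w x y / m x * (u (y, s) - u (x, s))) has_real_derivative
      (\<Sum>y\<in>{y. adj x y}. w x y / m x * (space_lap u (y, t) - space_lap u (x, t)))) (at t within {..0})"
    using assms t unfolding heat_solution_def by (intro DERIV_sum DERIV_cmult DERIV_diff) auto
  then show "((\<lambda>s. space_lap u (x, s)) has_real_derivative space_lap (space_lap u) (x, t))
      (at t within {..0})"
    by (simp add: space_lap_apply laplacian_def)
qed

lemma heat_solution_funpow: "heat_solution u \<Longrightarrow> heat_solution ((space_lap ^^ j) u)"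
  by (induction j) (auto intro: heat_solution_space_lap)

lemma heat_solution_deriv_funpow:
  assumes "heat_solution u" "t \<le> 0"
  shows "((\<lambda>s. (space_lap ^^ i) u (x, s)) has_real_derivative (space_lap ^^ Suc i) u (x, t))
    (at t within {..0})"
  using heat_solution_deriv[OF heat_solution_funpow[OF assms(1)] assms(2) order_refl] by simp

lemma heat_solution_continuous_on:
  assumes "heat_solution u" "S \<subseteq> {..0}"
  shows "continuous_on S (\<lambda>s. u (x, s))"
  using heat_solution_deriv[OF assms(1) _ assms(2)] assms(2) DERIV_continuous
  by (fastforce simp: continuous_on_eq_continuous_within)

lemma heat_solution_zero: "heat_solution 0"
  by (simp add: heat_solution_def space_lap_def laplacian_def)

lemma heat_solution_add: "heat_solution u \<Longrightarrow> heat_solution v \<Longrightarrow> heat_solution (u + v)"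
  unfolding heat_solution_def linear_add[OF linear_space_lap] by (auto intro: DERIV_add)

lemma heat_solution_scaleR: "heat_solution u \<Longrightarrow> heat_solution (c *\<^sub>R u)"
  unfolding heat_solution_def linear_scale[OF linear_space_lap] by (auto intro: DERIV_cmult)

subsection \<open>Caccioppoli inequalities\<close>

definition cutoff :: "'v \<Rightarrow> real \<Rightarrow> 'v \<Rightarrow> real" where
  "cutoff x0 R x = max 0 (min 1 ((2 * R - \<rho> x x0) / R))"

lemma cutoff_nonneg: "cutoff x0 R x \<ge> 0"
  and cutoff_le_one: "cutoff x0 R x \<le> 1"
  by (simp_all add: cutoff_def)

lemma cutoff_eq_one: "R > 0 \<Longrightarrow> \<rho> x x0 \<le> R \<Longrightarrow> cutoff x0 R x = 1"
  by (simp add: cutoff_def field_simps)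

lemma cutoff_nonzero_imp_dist_less:
  assumes "R > 0" "cutoff x0 R x \<noteq> 0"
  shows "\<rho> x x0 < 2 * R"
proof (rule ccontr)
  assume "\<not> \<rho> x x0 < 2 * R"
  then have "(2 * R - \<rho> x x0) / R \<le> 0" using assms(1) by (simp add: divide_nonpos_pos)
  then have "cutoff x0 R x = 0" by (simp add: cutoff_def)
  with assms(2) show False by simp
qed

lemma cutoff_diff_sq_le:
  assumes R: "R > 0"
  shows "(cutoff x0 R y - cutoff x0 R x)\<^sup>2 \<le> (\<rho> x y)\<^sup>2 / R\<^sup>2"
proof -
  have clamp: "\<bar>max 0 (min 1 a) - max 0 (min 1 b)\<bar> \<le> \<bar>a - b\<bar>" for a b :: real
    by (auto simp: max_def min_def abs_if)
  have "\<bar>\<rho> x x0 - \<rho> y x0\<bar> \<le> \<rho> x y"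
    using rho_triangle[of x x0 y] rho_triangle[of y x0 x] rho_sym[of x y] by auto
  moreover have "(2 * R - \<rho> y x0) / R - (2 * R - \<rho> x x0) / R = (\<rho> x x0 - \<rho> y x0) / R"
    using R by (simp add: field_simps)
  ultimately have "\<bar>(2 * R - \<rho> y x0) / R - (2 * R - \<rho> x x0) / R\<bar> \<le> \<rho> x y / R"
    using R by (simp add: abs_divide divide_right_mono)
  then have "\<bar>cutoff x0 R y - cutoff x0 R x\<bar> \<le> \<rho> x y / R"
    unfolding cutoff_def using clamp order_trans by blast
  then have "\<bar>cutoff x0 R y - cutoff x0 R x\<bar>\<^sup>2 \<le> (\<rho> x y / R)\<^sup>2"
    by (intro power_mono) auto
  then show ?thesis by (simp add: power_divide)
qed

text \<open>The intrinsic-metric condition is what bounds the energy of the cutoff.\<close>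

lemma cutoff_gradient_at_le:
  assumes "finite T" "R > 0"
  shows "(\<Sum>y\<in>T. w x y * (cutoff x0 R y - cutoff x0 R x)\<^sup>2) \<le> m x / R\<^sup>2"
proof -
  have "(\<Sum>y\<in>T. w x y * (cutoff x0 R y - cutoff x0 R x)\<^sup>2) \<le> (\<Sum>y\<in>T. w x y * (\<rho> x y)\<^sup>2 / R\<^sup>2)"
    using cutoff_diff_sq_le[OF assms(2)] w_nonneg
    by (intro sum_mono) (metis mult_left_mono times_divide_eq_right)
  also have "\<dots> = (\<Sum>y\<in>T. w x y * (\<rho> x y)\<^sup>2) / R\<^sup>2"
    by (simp add: sum_divide_distrib)
  also have "\<dots> \<le> m x / R\<^sup>2"
    using intrinsic_sum_le[OF assms(1)] by (simp add: divide_right_mono)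
  finally show ?thesis .
qed

lemma cutoff_gradient_weighted_le:
  assumes "finite T" "R > 0" "\<And>x. h x \<ge> 0"
  shows "(\<Sum>x\<in>T. \<Sum>y\<in>T. w x y * ((cutoff x0 R y - cutoff x0 R x)\<^sup>2 * (h x + h y)))
    \<le> 2 / R\<^sup>2 * (\<Sum>x\<in>T. m x * h x)"
proof -
  let ?d = "\<lambda>x y. (cutoff x0 R y - cutoff x0 R x)\<^sup>2"
  have "(\<Sum>x\<in>T. \<Sum>y\<in>T. w x y * (?d x y * h y)) = (\<Sum>x\<in>T. \<Sum>y\<in>T. w x y * (?d y x * h x))"
    by (rule sum_sum_w_swap)
  also have "\<dots> = (\<Sum>x\<in>T. \<Sum>y\<in>T. w x y * (?d x y * h x))"
    by (simp add: power2_commute)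
  finally have "(\<Sum>x\<in>T. \<Sum>y\<in>T. w x y * (?d x y * (h x + h y)))
      = 2 * (\<Sum>x\<in>T. h x * (\<Sum>y\<in>T. w x y * ?d x y))"
    by (simp add: distrib_left sum.distrib sum_distrib_left algebra_simps)
  also have "\<dots> \<le> 2 * (\<Sum>x\<in>T. h x * (m x / R\<^sup>2))"
    using cutoff_gradient_at_le[OF assms(1,2)] assms(3)
    by (intro mult_left_mono sum_mono) auto
  finally show ?thesis
    by (simp add: sum_distrib_left sum_divide_distrib algebra_simps)
qed

lemma cutoff_support_closed:
  assumes R: "R > 0" and supp: "\<And>x. cutoff x0 R x = 0 \<Longrightarrow> a x = 0"
    and "a x \<noteq> 0" "adj x y"
  shows "y \<in> ball_rho \<rho> x0 (2 * R + s)"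
  using assms cutoff_nonzero_imp_dist_less[OF R, of x0 x] adj_in_ball[of x y x0 "2 * R"] by force

lemma mass_le_cutoff_mass:
  assumes R: "R > 0"
  shows "(\<Sum>x\<in>ball_rho \<rho> x0 R. m x * (f x)\<^sup>2)
    \<le> (\<Sum>x\<in>ball_rho \<rho> x0 (2 * R + s). m x * (cutoff x0 R x * f x)\<^sup>2)"
proof -
  have "(\<Sum>x\<in>ball_rho \<rho> x0 R. m x * (f x)\<^sup>2)
      = (\<Sum>x\<in>ball_rho \<rho> x0 R. m x * (cutoff x0 R x * f x)\<^sup>2)"
    using cutoff_eq_one[OF R] by (intro sum.cong) (auto simp: ball_rho_def)
  also have "\<dots> \<le> (\<Sum>x\<in>ball_rho \<rho> x0 (2 * R + s). m x * (cutoff x0 R x * f x)\<^sup>2)"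
    using finite_ball[of "2 * R + s" x0] R jump_nonneg ball_mono[of R "2 * R + s" x0] m_nonneg
    by (intro sum_mono2) auto
  finally show ?thesis .
qed

lemma energy_le_cutoff_energy:
  assumes R: "R > 0"
  shows "(\<Sum>x\<in>ball_rho \<rho> x0 R. \<Sum>y\<in>ball_rho \<rho> x0 R. w x y * (g y - g x)\<^sup>2)
    \<le> (\<Sum>x\<in>ball_rho \<rho> x0 (2 * R + s). \<Sum>y\<in>ball_rho \<rho> x0 (2 * R + s).
          w x y * (cutoff x0 R y * g y - cutoff x0 R x * g x)\<^sup>2)"
proof -
  have "(\<Sum>x\<in>ball_rho \<rho> x0 R. \<Sum>y\<in>ball_rho \<rho> x0 R. w x y * (g y - g x)\<^sup>2)
      = (\<Sum>x\<in>ball_rho \<rho> x0 R. \<Sum>y\<in>ball_rho \<rho> x0 R.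
          w x y * (cutoff x0 R y * g y - cutoff x0 R x * g x)\<^sup>2)"
    using cutoff_eq_one[OF R] by (intro sum.cong refl) (auto simp: ball_rho_def)
  also have "\<dots> \<le> (\<Sum>x\<in>ball_rho \<rho> x0 (2 * R + s). \<Sum>y\<in>ball_rho \<rho> x0 (2 * R + s).
          w x y * (cutoff x0 R y * g y - cutoff x0 R x * g x)\<^sup>2)"
    using finite_ball[of "2 * R + s" x0] R jump_nonneg ball_mono[of R "2 * R + s" x0] w_nonneg
    by (intro sum_sum_mono_subset) auto
  finally show ?thesis .
qed

lemma cutoff_mass_le: "(\<Sum>x\<in>T. m x * (cutoff x0 R x * f x)\<^sup>2) \<le> (\<Sum>x\<in>T. m x * (f x)\<^sup>2)"
proof (rule sum_mono)
  fix x
  have "(cutoff x0 R x * f x)\<^sup>2 \<le> (f x)\<^sup>2"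
    using cutoff_nonneg[of x0 R x] cutoff_le_one[of x0 R x]
    by (auto simp: power_mult_distrib power_le_one intro: mult_left_le_one_le)
  then show "m x * (cutoff x0 R x * f x)\<^sup>2 \<le> m x * (f x)\<^sup>2"
    using m_nonneg by (rule mult_left_mono)
qed

lemma cutoff_weighted_energy_le:
  "(\<Sum>x\<in>T. \<Sum>y\<in>T. w x y * (cutoff x0 R x * cutoff x0 R y) * (g y - g x)\<^sup>2)
    \<le> (\<Sum>x\<in>T. \<Sum>y\<in>T. w x y * (g y - g x)\<^sup>2)"
proof (intro sum_mono)
  fix x y
  have "cutoff x0 R x * cutoff x0 R y * (g y - g x)\<^sup>2 \<le> (g y - g x)\<^sup>2"
    using cutoff_nonneg cutoff_le_one
    by (intro mult_left_le_one_le mult_le_one mult_nonneg_nonneg) auto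
  then show "w x y * (cutoff x0 R x * cutoff x0 R y) * (g y - g x)\<^sup>2 \<le> w x y * (g y - g x)\<^sup>2"
    using w_nonneg[of x y] by (simp add: mult.assoc mult_left_mono)
qed

lemma caccioppoli_energy_le:
  fixes g :: "'v \<Rightarrow> real" and x0 :: 'v and R :: real
  assumes R: "R > 0"
  defines "T \<equiv> ball_rho \<rho> x0 (2 * R + s)" and "e \<equiv> cutoff x0 R"
  shows "(\<Sum>x\<in>T. \<Sum>y\<in>T. w x y * (e y * g y - e x * g x)\<^sup>2)
    \<le> -2 * (\<Sum>x\<in>T. m x * (e x)\<^sup>2 * g x * lap g x) + (\<Sum>x\<in>T. m x * (g x)\<^sup>2) / R\<^sup>2"
proof -
  have T: "finite T" using finite_ball R jump_nonneg by (simp add: T_def)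
  have parts: "(\<Sum>x\<in>T. m x * ((e x)\<^sup>2 * g x) * lap g x)
      = -(1/2) * (\<Sum>x\<in>T. \<Sum>y\<in>T. w x y * ((e y)\<^sup>2 * g y - (e x)\<^sup>2 * g x) * (g y - g x))"
    using T cutoff_support_closed[OF R, of x0 "\<lambda>x. (e x)\<^sup>2 * g x"]
    by (intro sum_by_parts) (auto simp: T_def e_def)
  have pointwise: "w x y * (e y * g y - e x * g x)\<^sup>2
      \<le> w x y * ((e y)\<^sup>2 * g y - (e x)\<^sup>2 * g x) * (g y - g x)
        + 1/2 * (w x y * ((e y - e x)\<^sup>2 * ((g x)\<^sup>2 + (g y)\<^sup>2)))" for x y
  proof -
    have "(e y * g y - e x * g x)\<^sup>2
        = ((e y)\<^sup>2 * g y - (e x)\<^sup>2 * g x) * (g y - g x) + (e y - e x)\<^sup>2 * (g x * g y)"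
      by (simp add: power2_eq_square algebra_simps)
    moreover have "(e y - e x)\<^sup>2 * (g x * g y) \<le> (e y - e x)\<^sup>2 * (((g x)\<^sup>2 + (g y)\<^sup>2) / 2)"
      using sum_squares_bound[of "g x" "g y"] by (intro mult_left_mono) auto
    ultimately have "(e y * g y - e x * g x)\<^sup>2
        \<le> ((e y)\<^sup>2 * g y - (e x)\<^sup>2 * g x) * (g y - g x) + (e y - e x)\<^sup>2 * (((g x)\<^sup>2 + (g y)\<^sup>2) / 2)"
      by linarith
    then have "w x y * (e y * g y - e x * g x)\<^sup>2 \<le> w x y *
        (((e y)\<^sup>2 * g y - (e x)\<^sup>2 * g x) * (g y - g x) + (e y - e x)\<^sup>2 * (((g x)\<^sup>2 + (g y)\<^sup>2) / 2))"
      by (rule mult_left_mono) (rule w_nonneg)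
    then show ?thesis by (simp add: algebra_simps add_divide_distrib)
  qed
  have "(\<Sum>x\<in>T. \<Sum>y\<in>T. w x y * (e y * g y - e x * g x)\<^sup>2)
      \<le> (\<Sum>x\<in>T. \<Sum>y\<in>T. w x y * ((e y)\<^sup>2 * g y - (e x)\<^sup>2 * g x) * (g y - g x))
        + 1/2 * (\<Sum>x\<in>T. \<Sum>y\<in>T. w x y * ((e y - e x)\<^sup>2 * ((g x)\<^sup>2 + (g y)\<^sup>2)))"
    using pointwise by (simp add: sum_distrib_left sum.distrib[symmetric] sum_mono)
  also have "\<dots> \<le> (\<Sum>x\<in>T. \<Sum>y\<in>T. w x y * ((e y)\<^sup>2 * g y - (e x)\<^sup>2 * g x) * (g y - g x))
        + 1/2 * (2 / R\<^sup>2 * (\<Sum>x\<in>T. m x * (g x)\<^sup>2))"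
    using cutoff_gradient_weighted_le[OF T R, of "\<lambda>x. (g x)\<^sup>2" x0] by (simp add: e_def mult.commute)
  finally show ?thesis
    using parts by (simp add: algebra_simps)
qed

text \<open>Since \<open>\<eta>\<^sub>y\<^sup>2 v\<^sub>y - \<eta>\<^sub>x\<^sup>2 v\<^sub>x = \<eta>\<^sub>x \<eta>\<^sub>y (v\<^sub>y - v\<^sub>x) + (\<eta>\<^sub>y - \<eta>\<^sub>x)(\<eta>\<^sub>x v\<^sub>x + \<eta>\<^sub>y v\<^sub>y)\<close>, the second
  product can be absorbed by Young's inequality.\<close>

lemma cutoff_product_le:
  fixes ex ey vx vy gx gy R :: real
  assumes R: "R > 0"
  shows "-((ey\<^sup>2 * vy - ex\<^sup>2 * vx) * (gy - gx))
    \<le> -(ex * ey * ((gy - gx) * (vy - vx)))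
      + R\<^sup>2 / 2 * ((ey - ex)\<^sup>2 * ((ex * vx)\<^sup>2 + (ey * vy)\<^sup>2)) + (gy - gx)\<^sup>2 / R\<^sup>2"
proof -
  define P where "P = (ey - ex) * (ex * vx + ey * vy)"
  define Q where "Q = gy - gx"
  have split: "(ey\<^sup>2 * vy - ex\<^sup>2 * vx) * (gy - gx) = ex * ey * ((gy - gx) * (vy - vx)) + P * Q"
    unfolding P_def Q_def by (simp add: power2_eq_square algebra_simps)
  have "0 \<le> (R * P / 2 + Q / R)\<^sup>2" by simp
  also have "\<dots> = R\<^sup>2 * P\<^sup>2 / 4 + P * Q + Q\<^sup>2 / R\<^sup>2"
    using R by (simp add: power2_eq_square field_simps)
  finally have young: "-(P * Q) \<le> R\<^sup>2 * P\<^sup>2 / 4 + Q\<^sup>2 / R\<^sup>2" by simp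
  define S where "S = (ex * vx)\<^sup>2 + (ey * vy)\<^sup>2"
  have "(ex * vx + ey * vy)\<^sup>2 \<le> 2 * S"
    using sum_squares_bound[of "ex * vx" "ey * vy"] by (simp add: S_def power2_sum)
  then have "(ey - ex)\<^sup>2 * (ex * vx + ey * vy)\<^sup>2 \<le> (ey - ex)\<^sup>2 * (2 * S)"
    by (rule mult_left_mono) simp
  then have "R\<^sup>2 / 4 * P\<^sup>2 \<le> R\<^sup>2 / 4 * ((ey - ex)\<^sup>2 * (2 * S))"
    unfolding P_def power_mult_distrib by (rule mult_left_mono) simp
  then have "R\<^sup>2 * P\<^sup>2 / 4 \<le> R\<^sup>2 / 2 * ((ey - ex)\<^sup>2 * ((ex * vx)\<^sup>2 + (ey * vy)\<^sup>2))"
    by (simp add: S_def algebra_simps)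
  with young split show ?thesis unfolding Q_def by linarith
qed

text \<open>Along the heat flow, the mixed term is half the time derivative of
  \<open>\<Sum>\<^sub>x\<^sub>y w\<^sub>x\<^sub>y \<eta>\<^sub>x \<eta>\<^sub>y (u\<^sub>y - u\<^sub>x)\<^sup>2\<close>.\<close>

lemma caccioppoli_lap_mass_le:
  fixes g :: "'v \<Rightarrow> real" and x0 :: 'v and R :: real
  assumes R: "R > 0"
  defines "T \<equiv> ball_rho \<rho> x0 (2 * R + s)" and "e \<equiv> cutoff x0 R"
  shows "(\<Sum>x\<in>T. m x * (e x * lap g x)\<^sup>2)
    \<le> -(\<Sum>x\<in>T. \<Sum>y\<in>T. w x y * (e x * e y) * ((g y - g x) * (lap g y - lap g x)))
      + (\<Sum>x\<in>T. \<Sum>y\<in>T. w x y * (g y - g x)\<^sup>2) / R\<^sup>2"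
proof -
  let ?v = "lap g"
  let ?A = "\<Sum>x\<in>T. m x * (e x * ?v x)\<^sup>2"
  let ?X = "\<Sum>x\<in>T. \<Sum>y\<in>T. w x y * (e x * e y) * ((g y - g x) * (?v y - ?v x))"
  let ?E = "\<Sum>x\<in>T. \<Sum>y\<in>T. w x y * ((e y - e x)\<^sup>2 * ((e x * ?v x)\<^sup>2 + (e y * ?v y)\<^sup>2))"
  let ?\<Gamma> = "\<Sum>x\<in>T. \<Sum>y\<in>T. w x y * (g y - g x)\<^sup>2"
  have T: "finite T" using finite_ball R jump_nonneg by (simp add: T_def)
  have "?A = (\<Sum>x\<in>T. m x * ((e x)\<^sup>2 * ?v x) * lap g x)"
    by (simp add: power2_eq_square algebra_simps)
  also have "\<dots> = -(1/2) * (\<Sum>x\<in>T. \<Sum>y\<in>T. w x y * ((e y)\<^sup>2 * ?v y - (e x)\<^sup>2 * ?v x) * (g y - g x))"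
    using T cutoff_support_closed[OF R, of x0 "\<lambda>x. (e x)\<^sup>2 * ?v x"]
    by (intro sum_by_parts) (auto simp: T_def e_def)
  also have "\<dots> = 1/2 * (\<Sum>x\<in>T. \<Sum>y\<in>T. w x y * (-(((e y)\<^sup>2 * ?v y - (e x)\<^sup>2 * ?v x) * (g y - g x))))"
    by (simp add: sum_negf mult.assoc)
  also have "\<dots> \<le> 1/2 * (\<Sum>x\<in>T. \<Sum>y\<in>T. w x y * (-(e x * e y * ((g y - g x) * (?v y - ?v x)))
      + R\<^sup>2 / 2 * ((e y - e x)\<^sup>2 * ((e x * ?v x)\<^sup>2 + (e y * ?v y)\<^sup>2)) + (g y - g x)\<^sup>2 / R\<^sup>2))"
    using cutoff_product_le[OF R] w_nonneg
    by (intro mult_left_mono sum_mono) auto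
  also have "\<dots> = 1/2 * (-?X + R\<^sup>2 / 2 * ?E + ?\<Gamma> / R\<^sup>2)"
  proof -
    have "(\<Sum>x\<in>T. \<Sum>y\<in>T. w x y * (-(e x * e y * ((g y - g x) * (?v y - ?v x))))) = -?X"
      by (simp add: sum_negf mult.assoc)
    moreover have "(\<Sum>x\<in>T. \<Sum>y\<in>T. w x y *
        (R\<^sup>2 / 2 * ((e y - e x)\<^sup>2 * ((e x * ?v x)\<^sup>2 + (e y * ?v y)\<^sup>2)))) = R\<^sup>2 / 2 * ?E"
      by (simp add: sum_distrib_left mult.left_commute)
    moreover have "(\<Sum>x\<in>T. \<Sum>y\<in>T. w x y * ((g y - g x)\<^sup>2 / R\<^sup>2)) = ?\<Gamma> / R\<^sup>2"
      by (simp add: sum_divide_distrib)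
    ultimately show ?thesis by (simp only: distrib_left sum.distrib)
  qed
  also have "\<dots> \<le> 1/2 * (-?X + R\<^sup>2 / 2 * (2 / R\<^sup>2 * ?A) + ?\<Gamma> / R\<^sup>2)"
    using cutoff_gradient_weighted_le[OF T R, of "\<lambda>x. (e x * ?v x)\<^sup>2" x0] R
    by (intro mult_left_mono add_mono order_refl) (auto simp: e_def)
  finally show ?thesis using R by (simp add: field_simps)
qed

subsection \<open>Space-time estimates and decay of iterated Laplacians\<close>

definition mass :: "('v \<times> real \<Rightarrow> real) \<Rightarrow> 'v \<Rightarrow> real \<Rightarrow> real \<Rightarrow> real" where
  "mass u x0 r t = (\<Sum>x\<in>ball_rho \<rho> x0 r. m x * (u (x, t))\<^sup>2)"

definition energy :: "('v \<times> real \<Rightarrow> real) \<Rightarrow> 'v \<Rightarrow> real \<Rightarrow> real \<Rightarrow> real" where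
  "energy u x0 r t =
    (\<Sum>x\<in>ball_rho \<rho> x0 r. \<Sum>y\<in>ball_rho \<rho> x0 r. w x y * (u (y, t) - u (x, t))\<^sup>2)"

lemma mass_nonneg: "mass u x0 r t \<ge> 0"
  by (simp add: mass_def m_nonneg sum_nonneg)

lemma energy_nonneg: "energy u x0 r t \<ge> 0"
  by (simp add: energy_def w_nonneg sum_nonneg)

lemma continuous_on_mass:
  "heat_solution u \<Longrightarrow> S \<subseteq> {..0} \<Longrightarrow> continuous_on S (mass u x0 r)"
  unfolding mass_def by (intro continuous_intros heat_solution_continuous_on)

lemma continuous_on_energy:
  "heat_solution u \<Longrightarrow> S \<subseteq> {..0} \<Longrightarrow> continuous_on S (energy u x0 r)"
  unfolding energy_def by (intro continuous_intros heat_solution_continuous_on)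

lemma mass_integral_mono:
  assumes u: "heat_solution u" and r: "0 < r" "r \<le> r'" and \<tau>: "0 \<le> \<tau>" "\<tau> \<le> \<tau>'"
  shows "integral {-\<tau>..0} (mass u x0 r) \<le> integral {-\<tau>'..0} (mass u x0 r')"
proof -
  have "integral {-\<tau>..0} (mass u x0 r) \<le> integral {-\<tau>..0} (mass u x0 r')"
    using finite_ball[of r' x0] ball_mono[OF r(2)] r continuous_on_mass[OF u]
    by (intro integral_mono_continuous) (auto simp: mass_def m_nonneg intro!: sum_mono2)
  also have "\<dots> \<le> integral {-\<tau>'..0} (mass u x0 r')"
    using \<tau> continuous_on_mass[OF u] mass_nonneg
    by (intro integral_subset_le integrable_continuous_interval) auto
  finally show ?thesis .
qed

text \<open>The time cutoff turns \<open>-2 \<Sum> m \<eta>\<^sup>2 u \<Delta>u\<close> into minus the time derivative of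
  \<open>\<Sum> m (\<eta> u)\<^sup>2\<close>.\<close>

lemma energy_integral_le_mass_integral:
  assumes u: "heat_solution u" and r: "r > 0" and \<tau>: "\<tau> > 0"
  shows "integral {-\<tau>/2..0} (energy u x0 r)
    \<le> 2 * (1/\<tau> + 1/r\<^sup>2) * integral {-\<tau>..0} (mass u x0 (2 * r + s))"
proof -
  define T where "T = ball_rho \<rho> x0 (2 * r + s)"
  define e where "e = cutoff x0 r"
  define E where "E t = (\<Sum>x\<in>T. m x * (e x * u (x, t))\<^sup>2)" for t
  define E' where "E' t = (\<Sum>x\<in>T. m x * (2 * (e x * u (x, t)) * (e x * space_lap u (x, t))))" for t
  define G where "G t = (\<Sum>x\<in>T. \<Sum>y\<in>T. w x y * (e y * u (y, t) - e x * u (x, t))\<^sup>2)" for t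
  let ?I = "{-\<tau>..0}" and ?M = "mass u x0 (2 * r + s)"
  note cont = heat_solution_continuous_on[OF u] heat_solution_continuous_on[OF heat_solution_space_lap[OF u]]
  have time_cutoff: "integral {-\<tau>/2..0} G \<le> 2 * (1/\<tau> * integral ?I E + integral ?I (\<lambda>t. ?M t / r\<^sup>2))"
  proof (rule integral_le_by_time_cutoff[where \<phi> = E' and c = 1])
    show "continuous_on ?I E'" "continuous_on ?I G" "continuous_on ?I (\<lambda>t. ?M t / r\<^sup>2)"
      unfolding E'_def G_def using cont continuous_on_mass[OF u, of ?I] r
      by (auto intro!: continuous_intros)
    fix t assume t: "t \<in> ?I"
    show "(E has_real_derivative E' t) (at t within ?I)"
      unfolding E_def E'_def using t
      by (intro DERIV_sum DERIV_cmult has_real_derivative_power2 heat_solution_deriv[OF u]) auto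
    show "E t \<ge> 0 \<and> G t \<ge> 0 \<and> ?M t / r\<^sup>2 \<ge> 0"
      unfolding E_def G_def using mass_nonneg m_nonneg w_nonneg by (auto intro!: sum_nonneg)
    define g where "g = (\<lambda>x. u (x, t))"
    have "lap g x = space_lap u (x, t)" for x by (simp add: g_def space_lap_apply)
    then show "G t \<le> -1 * E' t + ?M t / r\<^sup>2"
      using caccioppoli_energy_le[OF r, of x0 g]
      by (simp add: G_def E'_def mass_def g_def T_def e_def sum_distrib_left algebra_simps
          power2_eq_square)
  qed (use \<tau> in auto)
  have energy_le: "integral {-\<tau>/2..0} (energy u x0 r) \<le> integral {-\<tau>/2..0} G"
    unfolding G_def T_def e_def energy_def using cont continuous_on_energy[OF u] \<tau>
    by (intro integral_mono_continuous energy_le_cutoff_energy[OF r]) (auto intro!: continuous_intros)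
  have E_le: "integral ?I E \<le> integral ?I ?M"
    unfolding E_def T_def e_def mass_def using cont
    by (intro integral_mono_continuous cutoff_mass_le) (auto intro!: continuous_intros)
  have "integral {-\<tau>/2..0} (energy u x0 r) \<le> 2 * (1/\<tau> * integral ?I E + integral ?I ?M / r\<^sup>2)"
    using energy_le time_cutoff by (simp add: integral_divide)
  also have "\<dots> \<le> 2 * (1/\<tau> * integral ?I ?M + integral ?I ?M / r\<^sup>2)"
    using E_le \<tau> by (simp add: divide_right_mono)
  also have "\<dots> = 2 * (1/\<tau> + 1/r\<^sup>2) * integral ?I ?M"
    by (simp add: algebra_simps)
  finally show ?thesis .
qed

lemma lap_mass_integral_le_energy_integral:
  assumes u: "heat_solution u" and R: "R > 0" and \<tau>: "\<tau> > 0"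
  shows "integral {-\<tau>/2..0} (mass (space_lap u) x0 R)
    \<le> 2 * (1/(2*\<tau>) + 1/R\<^sup>2) * integral {-\<tau>..0} (energy u x0 (2 * R + s))"
proof -
  define T where "T = ball_rho \<rho> x0 (2 * R + s)"
  define e where "e = cutoff x0 R"
  define A where "A t = (\<Sum>x\<in>T. m x * (e x * space_lap u (x, t))\<^sup>2)" for t
  define D where "D t = (\<Sum>x\<in>T. \<Sum>y\<in>T. w x y * (e x * e y) * (u (y, t) - u (x, t))\<^sup>2)" for t
  define D' where "D' t = (\<Sum>x\<in>T. \<Sum>y\<in>T. w x y * (e x * e y) *
      (2 * (u (y, t) - u (x, t)) * (space_lap u (y, t) - space_lap u (x, t))))" for t
  let ?I = "{-\<tau>..0}" and ?\<Gamma> = "energy u x0 (2 * R + s)"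
  note cont = heat_solution_continuous_on[OF u] heat_solution_continuous_on[OF heat_solution_space_lap[OF u]]
  have time_cutoff: "integral {-\<tau>/2..0} A \<le> 2 * (1/2 / \<tau> * integral ?I D + integral ?I (\<lambda>t. ?\<Gamma> t / R\<^sup>2))"
  proof (rule integral_le_by_time_cutoff[where \<phi> = D'])
    show "continuous_on ?I D'" "continuous_on ?I A" "continuous_on ?I (\<lambda>t. ?\<Gamma> t / R\<^sup>2)"
      unfolding D'_def A_def using cont continuous_on_energy[OF u, of ?I] R
      by (auto intro!: continuous_intros)
    fix t assume t: "t \<in> ?I"
    show "(D has_real_derivative D' t) (at t within ?I)"
      unfolding D_def D'_def using t
      by (intro DERIV_sum DERIV_cmult has_real_derivative_power2 DERIV_diff heat_solution_deriv[OF u])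
        auto
    show "D t \<ge> 0 \<and> A t \<ge> 0 \<and> ?\<Gamma> t / R\<^sup>2 \<ge> 0"
      unfolding D_def A_def e_def using energy_nonneg m_nonneg w_nonneg cutoff_nonneg
      by (auto intro!: sum_nonneg)
    define g where "g = (\<lambda>x. u (x, t))"
    have "lap g x = space_lap u (x, t)" for x by (simp add: g_def space_lap_apply)
    moreover have "D' t = 2 * (\<Sum>x\<in>T. \<Sum>y\<in>T. w x y * (e x * e y) *
        ((u (y, t) - u (x, t)) * (space_lap u (y, t) - space_lap u (x, t))))"
      unfolding D'_def sum_distrib_left by (intro sum.cong refl) (simp add: algebra_simps)
    ultimately show "A t \<le> -(1/2) * D' t + ?\<Gamma> t / R\<^sup>2"
      using caccioppoli_lap_mass_le[OF R, of x0 g]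
      by (simp add: A_def energy_def g_def T_def e_def)
  qed (use \<tau> in auto)
  have mass_le: "integral {-\<tau>/2..0} (mass (space_lap u) x0 R) \<le> integral {-\<tau>/2..0} A"
    unfolding A_def T_def e_def mass_def using cont \<tau>
    by (intro integral_mono_continuous mass_le_cutoff_mass[OF R]) (auto intro!: continuous_intros)
  have D_le: "integral ?I D \<le> integral ?I ?\<Gamma>"
    unfolding D_def T_def e_def energy_def using cont
    by (intro integral_mono_continuous cutoff_weighted_energy_le) (auto intro!: continuous_intros)
  have "integral {-\<tau>/2..0} (mass (space_lap u) x0 R)
      \<le> 2 * (1/2 / \<tau> * integral ?I D + integral ?I ?\<Gamma> / R\<^sup>2)"
    using mass_le time_cutoff by (simp add: integral_divide)
  also have "\<dots> \<le> 2 * (1/2 / \<tau> * integral ?I ?\<Gamma> + integral ?I ?\<Gamma> / R\<^sup>2)"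
    using D_le \<tau> by (simp add: divide_right_mono)
  also have "\<dots> = 2 * (1/(2*\<tau>) + 1/R\<^sup>2) * integral ?I ?\<Gamma>"
    by (simp add: algebra_simps)
  finally show ?thesis .
qed


definition cylinder_mass :: "('v \<times> real \<Rightarrow> real) \<Rightarrow> 'v \<Rightarrow> real \<Rightarrow> real" where
  "cylinder_mass u x0 r = integral {-(r\<^sup>2)..0} (mass u x0 r)"

lemma cylinder_mass_nonneg: "heat_solution u \<Longrightarrow> cylinder_mass u x0 r \<ge> 0"
  unfolding cylinder_mass_def
  by (intro integral_nonneg_continuous continuous_on_mass mass_nonneg) auto

lemma cylinder_mass_space_lap_le:
  assumes u: "heat_solution u" and R: "R > 0" "s \<le> R"
  shows "cylinder_mass (space_lap u) x0 R \<le> (25/4) / R^4 * cylinder_mass u x0 (7 * R)"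
proof -
  let ?c = "2 * (1/(4*R\<^sup>2) + 1/R\<^sup>2)"
  have c: "?c = (5/2) / R\<^sup>2" using R by (simp add: field_simps)
  have R': "2 * R + s > 0" using R jump_nonneg by simp
  have "cylinder_mass (space_lap u) x0 R = integral {-(2*R\<^sup>2)/2..0} (mass (space_lap u) x0 R)"
    by (simp add: cylinder_mass_def)
  also have "\<dots> \<le> ?c * integral {-(2*R\<^sup>2)..0} (energy u x0 (2 * R + s))"
    using lap_mass_integral_le_energy_integral[OF u R(1), of "2*R\<^sup>2" x0] R by simp
  also have "\<dots> \<le> ?c * (?c * integral {-(4*R\<^sup>2)..0} (mass u x0 (2 * (2 * R + s) + s)))"
  proof (rule mult_left_mono)
    have "integral {-(4*R\<^sup>2)/2..0} (energy u x0 (2 * R + s))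
        \<le> 2 * (1/(4*R\<^sup>2) + 1/(2 * R + s)\<^sup>2) * integral {-(4*R\<^sup>2)..0} (mass u x0 (2 * (2 * R + s) + s))"
      using energy_integral_le_mass_integral[OF u R', of "4*R\<^sup>2" x0] R by simp
    also have "\<dots> \<le> ?c * integral {-(4*R\<^sup>2)..0} (mass u x0 (2 * (2 * R + s) + s))"
      using R jump_nonneg continuous_on_mass[OF u] mass_nonneg
      by (intro mult_right_mono mult_left_mono add_left_mono divide_left_mono power_mono
          integral_nonneg_continuous) auto
    finally show "integral {-(2*R\<^sup>2)..0} (energy u x0 (2 * R + s))
        \<le> ?c * integral {-(4*R\<^sup>2)..0} (mass u x0 (2 * (2 * R + s) + s))"
      by simp
  qed (use R in simp)
  also have "\<dots> \<le> ?c * (?c * cylinder_mass u x0 (7 * R))"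
    unfolding cylinder_mass_def using R jump_nonneg
    by (intro mult_left_mono mass_integral_mono[OF u]) (auto simp: power2_eq_square)
  also have "\<dots> = (25/4) / R^4 * cylinder_mass u x0 (7 * R)"
    unfolding c using R by (simp add: field_simps power2_eq_square eval_nat_numeral)
  finally show ?thesis .
qed

lemma cylinder_mass_funpow_space_lap_le:
  assumes u: "heat_solution u" and R: "R > 0" "s \<le> R"
  shows "cylinder_mass ((space_lap ^^ j) u) x0 R \<le> (25/4)^j / R^(4*j) * cylinder_mass u x0 (7^j * R)"
  using u
proof (induction j arbitrary: u)
  case (Suc j)
  have R7: "7^j * R > 0" "R \<le> 7^j * R" using R by auto
  have "cylinder_mass ((space_lap ^^ Suc j) u) x0 R = cylinder_mass ((space_lap ^^ j) (space_lap u)) x0 R"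
    by (simp only: funpow_Suc_right o_apply)
  also have "\<dots> \<le> (25/4)^j / R^(4*j) * cylinder_mass (space_lap u) x0 (7^j * R)"
    using Suc.IH heat_solution_space_lap[OF Suc.prems] by blast
  also have "\<dots> \<le> (25/4)^j / R^(4*j) * ((25/4) / R^4 * cylinder_mass u x0 (7^Suc j * R))"
  proof (rule mult_left_mono)
    have "cylinder_mass (space_lap u) x0 (7^j * R) \<le> (25/4) / (7^j * R)^4 * cylinder_mass u x0 (7 * (7^j * R))"
      using R R7 by (intro cylinder_mass_space_lap_le[OF Suc.prems]) linarith+
    also have "\<dots> \<le> (25/4) / R^4 * cylinder_mass u x0 (7 * (7^j * R))"
      using R R7 cylinder_mass_nonneg[OF Suc.prems]
      by (intro mult_right_mono divide_left_mono power_mono mult_pos_pos) auto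
    finally show "cylinder_mass (space_lap u) x0 (7^j * R) \<le> (25/4) / R^4 * cylinder_mass u x0 (7^Suc j * R)"
      by (simp add: mult.assoc)
  qed (use R in simp)
  also have "\<dots> = (25/4)^(Suc j) / R^(4 * Suc j) * cylinder_mass u x0 (7^(Suc j) * R)"
    by (simp add: power_add field_simps)
  finally show ?case .
qed simp

definition parabolic_growth :: "('v \<times> real \<Rightarrow> real) \<Rightarrow> 'v \<Rightarrow> real \<Rightarrow> real \<Rightarrow> bool" where
  "parabolic_growth u x0 C k \<longleftrightarrow>
    (\<forall>r>0. \<forall>x\<in>ball_rho \<rho> x0 r. \<forall>t\<in>{-(r\<^sup>2)..0}. \<bar>u (x, t)\<bar> \<le> C * (1 + r) powr (2 * k))"

lemma parabolic_growth_nonneg: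
  assumes "parabolic_growth u x0 C k"
  shows "C \<ge> 0"
proof -
  have "\<forall>x\<in>ball_rho \<rho> x0 1. \<forall>t\<in>{-(1\<^sup>2)..0}. \<bar>u (x, t)\<bar> \<le> C * (1 + 1) powr (2 * k)"
    using assms unfolding parabolic_growth_def by (elim allE[of _ 1]) simp
  then have "\<bar>u (x0, 0)\<bar> \<le> C * (1 + 1) powr (2 * k)"
    using center_in_ball[of 1 x0] by simp
  then have "0 \<le> C * (1 + 1) powr (2 * k)" by (rule order_trans[OF abs_ge_zero])
  then show ?thesis by (simp add: zero_le_mult_iff)
qed

lemma volume_growth_const_pos:
  assumes "\<forall>r>0. (\<Sum>y\<in>ball_rho \<rho> x0 r. m y) \<le> Cv * (1 + r) powr a"
  shows "Cv > 0"
proof -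
  have "0 < (\<Sum>y\<in>ball_rho \<rho> x0 1. m y)"
    using finite_ball[of 1 x0] center_in_ball[of 1 x0] m_pos m_nonneg by (intro sum_pos2) auto
  also have "\<dots> \<le> Cv * (1 + 1) powr a" using assms[rule_format, of 1] by simp
  finally show ?thesis by (simp add: zero_less_mult_iff)
qed

lemma cylinder_mass_le_poly:
  assumes u: "heat_solution u" and growth: "parabolic_growth u x0 C k"
    and vol: "\<forall>r>0. (\<Sum>y\<in>ball_rho \<rho> x0 r. m y) \<le> Cv * (1 + r) powr a"
    and N: "a + 4 * k \<le> real N" and r: "r > 0"
  shows "cylinder_mass u x0 r \<le> r\<^sup>2 * (C\<^sup>2 * Cv * (1 + r) ^ N)"
proof -
  let ?B = "C * (1 + r) powr (2 * k)"
  have Cv: "Cv > 0" by (rule volume_growth_const_pos[OF vol])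
  have "mass u x0 r t \<le> C\<^sup>2 * Cv * (1 + r) ^ N" if t: "t \<in> {-(r\<^sup>2)..0}" for t
  proof -
    have "mass u x0 r t \<le> (\<Sum>x\<in>ball_rho \<rho> x0 r. m x * ?B\<^sup>2)"
      unfolding mass_def
    proof (rule sum_mono)
      fix x assume "x \<in> ball_rho \<rho> x0 r"
      then have "\<bar>u (x, t)\<bar> \<le> ?B" using growth r t unfolding parabolic_growth_def by blast
      then have "\<bar>u (x, t)\<bar>\<^sup>2 \<le> ?B\<^sup>2" by (intro power_mono) auto
      then show "m x * (u (x, t))\<^sup>2 \<le> m x * ?B\<^sup>2" by (simp add: m_nonneg mult_left_mono)
    qed
    also have "\<dots> = ?B\<^sup>2 * (\<Sum>y\<in>ball_rho \<rho> x0 r. m y)"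
      by (simp add: sum_distrib_right mult.commute)
    also have "\<dots> \<le> ?B\<^sup>2 * (Cv * (1 + r) powr a)"
      using vol r by (intro mult_left_mono) auto
    also have "\<dots> = C\<^sup>2 * Cv * (1 + r) powr (4 * k + a)"
      using r by (simp add: power2_eq_square powr_add[symmetric] algebra_simps)
    also have "\<dots> \<le> C\<^sup>2 * Cv * (1 + r) powr (real N)"
      using Cv N r by (intro mult_left_mono powr_mono) auto
    also have "\<dots> = C\<^sup>2 * Cv * (1 + r) ^ N"
      using r by (simp add: powr_realpow)
    finally show ?thesis .
  qed
  then have "cylinder_mass u x0 r \<le> integral {-(r\<^sup>2)..0} (\<lambda>t. C\<^sup>2 * Cv * (1 + r) ^ N)"
    unfolding cylinder_mass_def using continuous_on_mass[OF u]
    by (intro integral_mono_continuous) auto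
  then show ?thesis by (simp add: mult_ac)
qed

text \<open>Each application of \<open>\<Delta>\<close> gains a factor \<open>R\<^sup>-\<^sup>4\<close> on cylinders, while the polynomial growth
  loses only a fixed power of \<open>R\<close>.\<close>

lemma cylinder_mass_funpow_le_inverse:
  assumes u: "heat_solution u" and growth: "parabolic_growth u x0 C k"
    and vol: "\<forall>r>0. (\<Sum>y\<in>ball_rho \<rho> x0 r. m y) \<le> Cv * (1 + r) powr a"
    and N: "a + 4 * k \<le> real N" and j: "N + 3 \<le> 4 * j"
  obtains K where "\<And>R. R \<ge> max 1 s \<Longrightarrow> cylinder_mass ((space_lap ^^ j) u) x0 R \<le> K / R"
proof -
  define K0 where "K0 = C\<^sup>2 * Cv"
  have K0: "K0 \<ge> 0" using volume_growth_const_pos[OF vol] by (simp add: K0_def)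
  define K where "K = (25/4)^j * (7^j)\<^sup>2 * K0 * (2 * 7^j)^N"
  have K: "K \<ge> 0" using K0 by (simp add: K_def)
  have "cylinder_mass ((space_lap ^^ j) u) x0 R \<le> K / R" if R: "R \<ge> max 1 s" for R
  proof -
    have R1: "R \<ge> 1" "R > 0" "R \<ge> s" using R by auto
    have "cylinder_mass ((space_lap ^^ j) u) x0 R \<le> (25/4)^j / R^(4*j) * cylinder_mass u x0 (7^j * R)"
      using cylinder_mass_funpow_space_lap_le[OF u R1(2,3)] .
    also have "\<dots> \<le> (25/4)^j / R^(4*j) * ((7^j * R)\<^sup>2 * (K0 * (1 + 7^j * R)^N))"
      using cylinder_mass_le_poly[OF u growth vol N, of "7^j * R"] R1
      by (intro mult_left_mono) (auto simp: K0_def)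
    also have "\<dots> \<le> (25/4)^j / R^(4*j) * ((7^j * R)\<^sup>2 * (K0 * (2 * 7^j * R)^N))"
    proof -
      have "1 \<le> 7^j * R" using R1 by (simp add: one_le_power mult_ge1_I)
      then have "(1 + 7^j * R)^N \<le> (2 * 7^j * R)^N" by (intro power_mono) linarith+
      then show ?thesis using K0 R1 by (intro mult_left_mono) auto
    qed
    also have "\<dots> = K * R^(N+2) / R^(4*j)"
      using R1 by (simp add: K_def power_mult_distrib power_add field_simps power2_eq_square)
    also have "\<dots> \<le> K / R"
    proof -
      have "R^(N+2) * R = R^(N+3)" by (simp add: power_add eval_nat_numeral)
      also have "\<dots> \<le> R^(4*j)" using R1 j by (intro power_increasing) auto
      finally have "K * (R^(N+2) * R) \<le> K * R^(4*j)" using K by (intro mult_left_mono) auto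
      then show ?thesis using R1 by (simp add: field_simps)
    qed
    finally show ?thesis .
  qed
  then show thesis by (rule that)
qed

lemma funpow_space_lap_eq_0_of_growth:
  assumes u: "heat_solution u" and growth: "parabolic_growth u x0 C k"
    and vol: "\<forall>r>0. (\<Sum>y\<in>ball_rho \<rho> x0 r. m y) \<le> Cv * (1 + r) powr a"
    and N: "a + 4 * k \<le> real N" and j: "N + 3 \<le> 4 * j" and t: "t \<le> 0"
  shows "(space_lap ^^ j) u (x, t) = 0"
proof -
  obtain K where K: "\<And>R. R \<ge> max 1 s \<Longrightarrow> cylinder_mass ((space_lap ^^ j) u) x0 R \<le> K / R"
    using cylinder_mass_funpow_le_inverse[OF u growth vol N j] by blast
  define v where "v = (space_lap ^^ j) u"
  have v: "heat_solution v" using heat_solution_funpow[OF u] by (simp add: v_def)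
  define R0 where "R0 = 1 + s + \<rho> x x0 - t"
  have R0: "R0 \<ge> max 1 s" "\<rho> x x0 \<le> R0" "-t \<le> R0\<^sup>2"
  proof -
    show "R0 \<ge> max 1 s" "\<rho> x x0 \<le> R0" using jump_nonneg rho_nonneg[of x x0] t by (auto simp: R0_def)
    have "-t \<le> R0" using jump_nonneg rho_nonneg[of x x0] by (simp add: R0_def)
    also have "R0 \<le> R0\<^sup>2" using \<open>R0 \<ge> max 1 s\<close> by (simp add: power2_eq_square)
    finally show "-t \<le> R0\<^sup>2" .
  qed
  define g where "g t' = m x * (v (x, t'))\<^sup>2" for t'
  have g: "continuous_on {-(R0\<^sup>2)..0} g" "\<And>s. g s \<ge> 0"
    unfolding g_def using heat_solution_continuous_on[OF v] m_nonneg
    by (auto intro!: continuous_intros)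
  have "integral {-(R0\<^sup>2)..0} g \<le> K * R powr -1" if R: "R \<ge> R0" for R
  proof -
    have "integral {-(R0\<^sup>2)..0} g \<le> integral {-(R0\<^sup>2)..0} (mass v x0 R)"
    proof (rule integral_mono_continuous[OF g(1)])
      show "continuous_on {-(R0\<^sup>2)..0} (mass v x0 R)" using continuous_on_mass[OF v] by auto
      have "x \<in> ball_rho \<rho> x0 R" using R R0 by (simp add: ball_rho_def)
      then show "g t' \<le> mass v x0 R t'" for t'
        unfolding g_def mass_def using finite_ball[of R x0] R R0 m_nonneg
        by (intro member_le_sum) auto
    qed
    also have "\<dots> \<le> cylinder_mass v x0 R"
      unfolding cylinder_mass_def using R R0
      by (intro mass_integral_mono[OF v]) (auto intro!: power_mono)
    also have "\<dots> \<le> K * R powr -1"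
      using K[of R] R R0 by (simp add: v_def powr_minus_divide)
    finally show ?thesis .
  qed
  then have "integral {-(R0\<^sup>2)..0} g \<le> 0"
    by (intro nonpos_if_le_powr_neg[of "-1"]) auto
  then have "g t = 0"
    using g R0 t by (intro integral_nonpos_imp_eq_0[OF g(1)]) auto
  then show ?thesis using m_pos[of x] by (simp add: g_def v_def)
qed


subsection \<open>Degree reduction in time\<close>

lemma funpow_space_lap_const_in_time:
  assumes u: "heat_solution u"
    and top: "\<forall>x t. t \<le> 0 \<longrightarrow> (space_lap ^^ Suc d) u (x, t) = 0" and t: "t \<le> 0"
  shows "(space_lap ^^ d) u (x, t) = (space_lap ^^ d) u (x, 0)"
proof -
  have "((\<lambda>s. (space_lap ^^ d) u (x, s)) has_real_derivative 0) (at t' within {..0})"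
    if "t' \<le> 0" for t'
    using heat_solution_deriv_funpow[OF u that, of d x] top that by simp
  from diff_eq_if_has_derivative_const[OF this t order_refl] show ?thesis by simp
qed

lemma backward_diff_funpow_heat:
  assumes u: "heat_solution u" and h: "h > 0"
    and top: "\<forall>x t. t \<le> 0 \<longrightarrow> (space_lap ^^ Suc d) u (x, t) = 0" and t: "t \<le> 0"
  shows "(backward_diff h ^^ d) (\<lambda>s. u (x, s)) t = h ^ d * (space_lap ^^ d) u (x, t)"
proof -
  let ?G = "\<lambda>i s. (space_lap ^^ i) u (x, s)"
  have "(backward_diff h ^^ d) (?G 0) t = h ^ d * ?G d t"
    by (rule backward_diff_funpow_eq[OF h]) (use heat_solution_deriv_funpow[OF u] top t in auto)
  then show ?thesis by simp
qed

lemma backward_diff_funpow_growth: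
  assumes growth: "parabolic_growth u x0 C k" and k: "k \<ge> 0" and h: "h \<ge> 1"
  shows "\<bar>(backward_diff h ^^ n) (\<lambda>s. u (x, s)) 0\<bar>
    \<le> 2 ^ n * C * (2 + \<rho> x x0 + sqrt n) powr (2 * k) * h powr k"
proof -
  define R where "R = \<rho> x x0 + sqrt (n * h) + 1"
  have R: "R > 0" "\<rho> x x0 \<le> R" "real n * h \<le> R\<^sup>2"
  proof -
    have "sqrt (n * h) \<ge> 0" using h by simp
    then show "R > 0" "\<rho> x x0 \<le> R" using rho_nonneg[of x x0] unfolding R_def by linarith+
    have "sqrt (n * h) \<le> R" using rho_nonneg[of x x0] by (simp add: R_def)
    then have "(sqrt (n * h))\<^sup>2 \<le> R\<^sup>2" using h by (intro power_mono) auto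
    then show "real n * h \<le> R\<^sup>2" using h by simp
  qed
  have "\<bar>(backward_diff h ^^ n) (\<lambda>s. u (x, s)) 0\<bar> \<le> 2 ^ n * (C * (1 + R) powr (2 * k))"
  proof (rule backward_diff_funpow_abs_le)
    fix t assume "t \<in> {0 - real n * h..0}"
    then have "t \<in> {-(R\<^sup>2)..0}" using R by auto
    moreover have "x \<in> ball_rho \<rho> x0 R" using R by (simp add: ball_rho_def)
    ultimately show "\<bar>u (x, t)\<bar> \<le> C * (1 + R) powr (2 * k)"
      using growth R(1) unfolding parabolic_growth_def by blast
  qed (use h in simp)
  also have "(1 + R) powr (2 * k) \<le> (2 + \<rho> x x0 + sqrt n) powr (2 * k) * h powr k"
  proof -
    have "2 + \<rho> x x0 \<le> (2 + \<rho> x x0) * sqrt h"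
      using h rho_nonneg[of x x0] by (simp add: mult_le_cancel_left1)
    then have "1 + R \<le> (2 + \<rho> x x0 + sqrt n) * sqrt h"
      by (simp add: R_def real_sqrt_mult distrib_right)
    then have "(1 + R) powr (2 * k) \<le> ((2 + \<rho> x x0 + sqrt n) * sqrt h) powr (2 * k)"
      using R k by (intro powr_mono2) auto
    also have "\<dots> = (2 + \<rho> x x0 + sqrt n) powr (2 * k) * h powr k"
      using h rho_nonneg[of x x0] by (simp add: powr_mult powr_half_sqrt[symmetric] powr_powr)
    finally show ?thesis .
  qed
  then have "2 ^ n * (C * (1 + R) powr (2 * k))
      \<le> 2 ^ n * (C * ((2 + \<rho> x x0 + sqrt n) powr (2 * k) * h powr k))"
    using parabolic_growth_nonneg[OF growth] by (intro mult_left_mono) auto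
  finally show ?thesis by (simp add: mult.assoc)
qed

text \<open>If \<open>\<Delta>\<^sup>d\<^sup>+\<^sup>1 u = 0\<close>, the \<open>d\<close>-th time difference with step \<open>h\<close> is \<open>h\<^sup>d \<Delta>\<^sup>d u\<close>,
  whereas growth of order \<open>2k\<close> bounds it by \<open>O(h\<^sup>k)\<close>.\<close>

lemma funpow_space_lap_eq_0_if_degree_gt:
  assumes u: "heat_solution u" and growth: "parabolic_growth u x0 C k" and k: "k \<ge> 0"
    and d: "real d > k" and top: "\<forall>x t. t \<le> 0 \<longrightarrow> (space_lap ^^ Suc d) u (x, t) = 0"
  shows "\<forall>x t. t \<le> 0 \<longrightarrow> (space_lap ^^ d) u (x, t) = 0"
proof (intro allI impI)
  fix x and t :: real assume t: "t \<le> 0"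
  define c where "c = (space_lap ^^ d) u (x, 0)"
  define A where "A = 2 ^ d * C * (2 + \<rho> x x0 + sqrt d) powr (2 * k)"
  have "\<bar>c\<bar> \<le> A * h powr (k - d)" if h: "h \<ge> 1" for h
  proof -
    have "h powr d * \<bar>c\<bar> = \<bar>(backward_diff h ^^ d) (\<lambda>s. u (x, s)) 0\<bar>"
      using backward_diff_funpow_heat[OF u _ top, of h 0 x] h
      by (simp add: c_def abs_mult powr_realpow)
    also have "\<dots> \<le> A * h powr k"
      using backward_diff_funpow_growth[OF growth k h] by (simp add: A_def)
    finally have "\<bar>c\<bar> \<le> A * h powr k / h powr d"
      using h by (simp add: pos_le_divide_eq mult.commute)
    then show ?thesis by (simp add: powr_diff)
  qed
  then have "\<bar>c\<bar> \<le> 0" by (intro nonpos_if_le_powr_neg[of "k - d"]) (use d in auto)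
  then show "(space_lap ^^ d) u (x, t) = 0"
    using funpow_space_lap_const_in_time[OF u top t] by (simp add: c_def)
qed

lemma funpow_space_lap_eq_0_descend:
  assumes u: "heat_solution u" and growth: "parabolic_growth u x0 C k" and k: "k \<ge> 0"
    and D: "real D > k"
  shows "\<forall>x t. t \<le> 0 \<longrightarrow> (space_lap ^^ (D + M)) u (x, t) = 0 \<Longrightarrow>
    \<forall>x t. t \<le> 0 \<longrightarrow> (space_lap ^^ D) u (x, t) = 0"
proof (induction M)
  case (Suc M)
  have "real (D + M) > k" using D by simp
  moreover have "\<forall>x t. t \<le> 0 \<longrightarrow> (space_lap ^^ Suc (D + M)) u (x, t) = 0"
    using Suc.prems by simp
  ultimately show ?case
    using funpow_space_lap_eq_0_if_degree_gt[OF u growth k] Suc.IH by blast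
qed simp

lemma funpow_space_lap_slice_harmonic:
  assumes u: "heat_solution u" and growth: "parabolic_growth u x0 C k" and k: "k \<ge> 0"
    and top: "\<forall>x t. t \<le> 0 \<longrightarrow> (space_lap ^^ Suc n) u (x, t) = 0"
  shows "(\<lambda>x. (space_lap ^^ n) u (x, 0)) \<in> harmonic_poly adj w m \<rho> (2 * k)"
  unfolding harmonic_poly_def
proof (intro CollectI conjI allI exI ballI impI)
  show "lap (\<lambda>x. (space_lap ^^ n) u (x, 0)) x = 0" for x
    using top by (simp add: space_lap_apply[symmetric])
  fix R :: real and x assume R: "R > 0" and x: "x \<in> ball_rho \<rho> x0 R"
  have "\<bar>(space_lap ^^ n) u (x, 0)\<bar> = \<bar>(backward_diff 1 ^^ n) (\<lambda>s. u (x, s)) 0\<bar>"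
    using backward_diff_funpow_heat[OF u _ top, of 1 0 x] by simp
  also have "\<dots> \<le> 2 ^ n * C * (2 + \<rho> x x0 + sqrt n) powr (2 * k)"
    using backward_diff_funpow_growth[OF growth k, of 1 n x] by simp
  also have "\<dots> \<le> 2 ^ n * C * ((2 + sqrt n) * (1 + R)) powr (2 * k)"
  proof -
    have "2 + \<rho> x x0 + sqrt n \<le> (2 + sqrt n) * (1 + R)"
    proof -
      have "\<rho> x x0 \<le> R" "0 \<le> R * sqrt n" using x R by (auto simp: ball_rho_def)
      moreover have "(2 + sqrt n) * (1 + R) = 2 + sqrt n + 2 * R + R * sqrt n"
        by (simp add: algebra_simps)
      ultimately show ?thesis using R by linarith
    qed
    then show ?thesis
      using R k rho_nonneg[of x x0] parabolic_growth_nonneg[OF growth]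
      by (intro mult_left_mono powr_mono2) auto
  qed
  also have "\<dots> = (2 ^ n * C * (2 + sqrt n) powr (2 * k)) * (1 + R) powr (2 * k)"
    using R by (simp add: powr_mult)
  finally show "\<bar>(space_lap ^^ n) u (x, 0)\<bar> \<le> (2 ^ n * C * (2 + sqrt n) powr (2 * k)) * (1 + R) powr (2 * k)" .
qed


subsection \<open>Counting dimensions\<close>

lemma parabolic_growth_add:
  assumes "parabolic_growth u x0 C k" "parabolic_growth v x0 C' k"
  shows "parabolic_growth (u + v) x0 (C + C') k"
  unfolding parabolic_growth_def
proof (intro allI impI ballI)
  fix r x t assume "r > 0" "x \<in> ball_rho \<rho> x0 r" "t \<in> {-(r\<^sup>2)..0}"
  then have "\<bar>u (x, t)\<bar> \<le> C * (1 + r) powr (2 * k)" "\<bar>v (x, t)\<bar> \<le> C' * (1 + r) powr (2 * k)"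
    using assms unfolding parabolic_growth_def by blast+
  then show "\<bar>(u + v) (x, t)\<bar> \<le> (C + C') * (1 + r) powr (2 * k)"
    using abs_triangle_ineq[of "u (x, t)" "v (x, t)"] by (simp add: distrib_right)
qed

lemma parabolic_growth_scaleR:
  assumes "parabolic_growth u x0 C k"
  shows "parabolic_growth (c *\<^sub>R u) x0 (\<bar>c\<bar> * C) k"
  unfolding parabolic_growth_def
proof (intro allI impI ballI)
  fix r x t assume "r > 0" "x \<in> ball_rho \<rho> x0 r" "t \<in> {-(r\<^sup>2)..0}"
  then have "\<bar>u (x, t)\<bar> \<le> C * (1 + r) powr (2 * k)"
    using assms unfolding parabolic_growth_def by blast
  then have "\<bar>c\<bar> * \<bar>u (x, t)\<bar> \<le> \<bar>c\<bar> * (C * (1 + r) powr (2 * k))"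
    by (intro mult_left_mono) auto
  then show "\<bar>(c *\<^sub>R u) (x, t)\<bar> \<le> \<bar>c\<bar> * C * (1 + r) powr (2 * k)"
    by (simp add: abs_mult mult.assoc)
qed

lemma parabolic_growth_recenter:
  assumes growth: "parabolic_growth u x1 C k" and k: "k \<ge> 0"
  shows "parabolic_growth u x0 (C * (1 + \<rho> x0 x1) powr (2 * k)) k"
  unfolding parabolic_growth_def
proof (intro allI impI ballI)
  fix r x t assume r: "r > 0" and x: "x \<in> ball_rho \<rho> x0 r" and t: "t \<in> {-(r\<^sup>2)..0}"
  define d where "d = \<rho> x0 x1"
  have d: "d \<ge> 0" by (simp add: d_def rho_nonneg)
  have "x \<in> ball_rho \<rho> x1 (r + d)"
    using x rho_triangle[of x x1 x0] by (simp add: ball_rho_def d_def)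
  moreover have "t \<in> {-((r + d)\<^sup>2)..0}"
  proof -
    have "r\<^sup>2 \<le> (r + d)\<^sup>2" using r d by (intro power_mono) auto
    then show ?thesis using t by auto
  qed
  ultimately have "\<bar>u (x, t)\<bar> \<le> C * (1 + (r + d)) powr (2 * k)"
    using growth r d unfolding parabolic_growth_def by (meson add_pos_nonneg)
  also have "\<dots> \<le> C * ((1 + d) * (1 + r)) powr (2 * k)"
    using r d k parabolic_growth_nonneg[OF growth]
    by (intro mult_left_mono powr_mono2) (auto simp: algebra_simps)
  also have "\<dots> = C * (1 + d) powr (2 * k) * (1 + r) powr (2 * k)"
    using r d by (simp add: powr_mult)
  finally show "\<bar>u (x, t)\<bar> \<le> C * (1 + \<rho> x0 x1) powr (2 * k) * (1 + r) powr (2 * k)"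
    by (simp add: d_def)
qed

definition ancient_ker :: "'v \<Rightarrow> real \<Rightarrow> nat \<Rightarrow> ('v \<times> real \<Rightarrow> real) set" where
  "ancient_ker x0 k n = {u. (\<forall>x t. t > 0 \<longrightarrow> u (x, t) = 0) \<and> heat_solution u \<and>
     (\<exists>C. parabolic_growth u x0 C k) \<and> (\<forall>x t. t \<le> 0 \<longrightarrow> (space_lap ^^ n) u (x, t) = 0)}"

lemma subspace_ancient_ker: "subspace (ancient_ker x0 k n)"
  unfolding subspace_def
proof (intro conjI ballI allI)
  have lin: "linear (space_lap ^^ n)" by (rule linear_funpow[OF linear_space_lap])
  have "parabolic_growth 0 x0 0 k" by (simp add: parabolic_growth_def)
  then show "0 \<in> ancient_ker x0 k n"
    using linear_0[OF lin] heat_solution_zero by (auto simp: ancient_ker_def)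
  fix u v assume u: "u \<in> ancient_ker x0 k n" and v: "v \<in> ancient_ker x0 k n"
  then obtain C C' where "parabolic_growth u x0 C k" "parabolic_growth v x0 C' k"
    by (auto simp: ancient_ker_def)
  then have "parabolic_growth (u + v) x0 (C + C') k" by (rule parabolic_growth_add)
  then show "u + v \<in> ancient_ker x0 k n"
    using u v linear_add[OF lin] heat_solution_add by (auto simp: ancient_ker_def)
next
  have lin: "linear (space_lap ^^ n)" by (rule linear_funpow[OF linear_space_lap])
  fix c :: real and u assume u: "u \<in> ancient_ker x0 k n"
  then obtain C where "parabolic_growth u x0 C k" by (auto simp: ancient_ker_def)
  then have "parabolic_growth (c *\<^sub>R u) x0 (\<bar>c\<bar> * C) k" by (rule parabolic_growth_scaleR)
  then show "c *\<^sub>R u \<in> ancient_ker x0 k n"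
    using u linear_scale[OF lin] heat_solution_scaleR by (auto simp: ancient_ker_def)
qed

lemma ancient_ker_0: "ancient_ker x0 k 0 \<subseteq> {0}"
proof
  fix u assume u: "u \<in> ancient_ker x0 k 0"
  have "u (x, t) = 0" for x t
    using u by (cases "t > 0") (auto simp: ancient_ker_def)
  then show "u \<in> {0}" by (auto simp: zero_fun_def)
qed

text \<open>Since \<open>\<Delta>\<^sup>n u\<close> is constant in time, the slice \<open>u \<mapsto> \<Delta>\<^sup>n u(\<cdot>, 0)\<close> vanishes only where
  \<open>\<Delta>\<^sup>n u = 0\<close>.\<close>

lemma fdim_ancient_ker_Suc_le:
  assumes k: "k \<ge> 0"
  shows "fdim (ancient_ker x0 k (Suc n))
    \<le> fdim (ancient_ker x0 k n) + fdim (harmonic_poly adj w m \<rho> (2 * k))"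
proof -
  define L where "L u = (\<lambda>x. (space_lap ^^ n) u (x, 0))" for u :: "'v \<times> real \<Rightarrow> real"
  have lin: "linear (space_lap ^^ n)" by (rule linear_funpow[OF linear_space_lap])
  have "linear L"
  proof (rule linearI)
    show "L (u + v) = L u + L v" for u v
      by (auto simp: L_def linear_add[OF lin])
    show "L (c *\<^sub>R u) = c *\<^sub>R L u" for c u
      by (auto simp: L_def linear_scale[OF lin])
  qed
  moreover have "L ` ancient_ker x0 k (Suc n) \<subseteq> harmonic_poly adj w m \<rho> (2 * k)"
    using funpow_space_lap_slice_harmonic[OF _ _ k] by (auto simp: ancient_ker_def L_def)
  ultimately have "fdim (ancient_ker x0 k (Suc n))
      \<le> fdim {u \<in> ancient_ker x0 k (Suc n). L u = 0} + fdim (harmonic_poly adj w m \<rho> (2 * k))"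
    by (rule fdim_le_kernel_image[OF _ subspace_ancient_ker])
  moreover have "{u \<in> ancient_ker x0 k (Suc n). L u = 0} \<subseteq> ancient_ker x0 k n"
  proof safe
    fix u assume u: "u \<in> ancient_ker x0 k (Suc n)" and "L u = 0"
    then have "(space_lap ^^ n) u (x, 0) = 0" for x by (metis L_def zero_fun_def)
    then show "u \<in> ancient_ker x0 k n"
      using u funpow_space_lap_const_in_time[of u n] by (auto simp: ancient_ker_def)
  qed
  ultimately show ?thesis
    by (meson add_right_mono fdim_mono order_trans)
qed

lemma fdim_ancient_ker_le:
  assumes k: "k \<ge> 0"
  shows "fdim (ancient_ker x0 k n) \<le> ereal (real n) * fdim (harmonic_poly adj w m \<rho> (2 * k))"
proof (induction n)
  case 0
  have "fdim (ancient_ker x0 k 0) \<le> fdim {0 :: 'v \<times> real \<Rightarrow> real}"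
    by (rule fdim_mono[OF ancient_ker_0])
  then show ?case by (simp add: fdim_zero zero_ereal_def[symmetric])
next
  case (Suc n)
  let ?H = "fdim (harmonic_poly adj w m \<rho> (2 * k))"
  have "fdim (ancient_ker x0 k (Suc n)) \<le> ereal (real n) * ?H + ?H"
    using fdim_ancient_ker_Suc_le[OF k, of x0 n] Suc.IH by (meson add_right_mono order_trans)
  also have "\<dots> = ?H * (ereal (real n) + 1)"
    by (subst ereal_right_distrib) (auto simp: mult.commute)
  also have "\<dots> = ereal (real (Suc n)) * ?H"
    by (simp add: mult.commute add.commute)
  finally show ?case .
qed

lemma ancient_poly_subset_ancient_ker:
  assumes k: "k \<ge> 0" and D: "real D > k"
    and vol: "\<forall>r>0. (\<Sum>y\<in>ball_rho \<rho> x0 r. m y) \<le> Cv * (1 + r) powr a"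
  shows "ancient_poly adj w m \<rho> (2 * k) \<subseteq> ancient_ker x0 k D"
proof
  fix u assume u: "u \<in> ancient_poly adj w m \<rho> (2 * k)"
  then have vanish: "\<forall>x t. t > 0 \<longrightarrow> u (x, t) = 0" and heat: "heat_solution u"
    unfolding ancient_poly_def heat_solution_def by (auto simp: space_lap_apply)
  obtain x1 C where "parabolic_growth u x1 C k"
    using u unfolding ancient_poly_def parabolic_growth_def by blast
  then have growth: "parabolic_growth u x0 (C * (1 + \<rho> x0 x1) powr (2 * k)) k"
    using parabolic_growth_recenter k by blast
  define N where "N = nat \<lceil>a + 4 * k\<rceil>"
  have N: "a + 4 * k \<le> real N" unfolding N_def by linarith
  have "\<forall>x t. t \<le> 0 \<longrightarrow> (space_lap ^^ (D + (N + 3))) u (x, t) = 0"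
    using funpow_space_lap_eq_0_of_growth[OF heat growth vol N, where j = "D + (N + 3)"] by auto
  then have "\<forall>x t. t \<le> 0 \<longrightarrow> (space_lap ^^ D) u (x, t) = 0"
    by (rule funpow_space_lap_eq_0_descend[OF heat growth k D])
  then show "u \<in> ancient_ker x0 k D"
    using vanish heat growth by (auto simp: ancient_ker_def)
qed


lemma fdim_ancient_poly_le:
  assumes k: "k \<ge> 0" and vol: "\<forall>r>0. (\<Sum>y\<in>ball_rho \<rho> x0 r. m y) \<le> Cv * (1 + r) powr a"
  shows "fdim (ancient_poly adj w m \<rho> (2 * k)) \<le> ereal (k + 1) * fdim (harmonic_poly adj w m \<rho> (2 * k))"
proof -
  define D where "D = nat \<lfloor>k\<rfloor> + 1"
  have D: "real D > k" "real D \<le> k + 1" using k by (auto simp: D_def) linarith+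
  let ?H = "fdim (harmonic_poly adj w m \<rho> (2 * k))"
  have "fdim (ancient_poly adj w m \<rho> (2 * k)) \<le> fdim (ancient_ker x0 k D)"
    using ancient_poly_subset_ancient_ker[OF k D(1) vol] by (rule fdim_mono)
  also have "\<dots> \<le> ereal (real D) * ?H"
    using fdim_ancient_ker_le[OF k] .
  also have "\<dots> \<le> ereal (k + 1) * ?H"
    using D(2) fdim_nonneg by (intro ereal_mult_right_mono) auto
  finally show ?thesis .
qed

end

theorem theorem1p2:
  fixes adj :: "'v \<Rightarrow> 'v \<Rightarrow> bool" and w :: "'v \<Rightarrow> 'v \<Rightarrow> real" and m :: "'v \<Rightarrow> real"
    and \<rho> :: "'v \<Rightarrow> 'v \<Rightarrow> real" and k :: real
  assumes G: "weighted_graph adj w m"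
    and intr: "intrinsic_metric adj w m \<rho>"
    and balls_finite: "\<forall>x. \<forall>R>0. finite (ball_rho \<rho> x R)"
    and jump: "bdd_above {\<rho> x y | x y. adj x y}"
    and growth: "\<exists>x0 \<alpha> C. \<forall>R>0. (\<Sum>y\<in>ball_rho \<rho> x0 R. m y) \<le> C * (1 + R) powr \<alpha>"
    and k: "k \<ge> 1"
  shows "fdim (ancient_poly adj w m \<rho> (2 * k)) \<le> ereal (k + 1) * fdim (harmonic_poly adj w m \<rho> (2 * k))"
proof -
  obtain b where b: "\<And>x y. adj x y \<Longrightarrow> \<rho> x y \<le> b"
    using jump unfolding bdd_above_def by blast
  have "intrinsic_graph adj w m \<rho> (max 0 b)"
    using G intr balls_finite b by unfold_locales (auto intro: le_max_iff_disj[THEN iffD2])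
  moreover obtain x0 \<alpha> C where "\<forall>R>0. (\<Sum>y\<in>ball_rho \<rho> x0 R. m y) \<le> C * (1 + R) powr \<alpha>"
    using growth by blast
  ultimately show ?thesis
    using k by (intro intrinsic_graph.fdim_ancient_poly_le) auto
qed

end
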